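(* As formal series of linear operators on $\mathcal N_q^-$ (with $x^-_i(v)=\sum_m x^-_{i,m}v^{-m}$ acting by left multiplication), for all $1\le i,j,k,m\le N$: $$\Omega_{\psi_m}(u)x^-_i(v)=\delta_{i,m}\delta(v\gamma/u)+g_{i,m,q^{-1}}(v\gamma/u)\,x^-_i(v)\Omega_{\psi_m}(u),$$ $$\Omega_{\phi_m}(u)x^-_i(v)=\delta_{i,m}\delta(u\gamma/v)+g_{i,m}(u\gamma/v)\,x^-_i(v)\Omega_{\phi_m}(u),$$ $$(q^{(\alpha_j|\alpha_k)}u_1-u_2)\Omega_{\psi_j}(u_1)\Omega_{\psi_k}(u_2)=(u_1-q^{(\alpha_j|\alpha_k)}u_2)\Omega_{\psi_k}(u_2)\Omega_{\psi_j}(u_1),$$ $$(q^{(\alpha_j|\alpha_k)}u_1-u_2)\Omega_{\phi_j}(u_1)\Omega_{\phi_k}(u_2)=(u_1-q^{(\alpha_j|\alpha_k)}u_2)\Omega_{\phi_k}(u_2)\Omega_{\phi_j}(u_1),$$ $$(q^{(\alpha_j|\alpha_k)}\gamma^2u_1-u_2)\Omega_{\phi_j}(u_1)\Omega_{\psi_k}(u_2)=(\gamma^2u_1-q^{(\alpha_j|\alpha_k)}u_2)\Omega_{\psi_k}(u_2)\Omega_{\phi_j}(u_1).$$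
   Context: Let $\mathfrak g$ be a finite-dimensional complex simple Lie algebra of rank $N$ with simple roots $\alpha_1,\dots,\alpha_N$ and invariant form $(\cdot|\cdot)$; $U_q(\widehat{\mathfrak g})$ the untwisted quantum affine algebra over $\mathbb C(q^{1/2})$ in Drinfeld's realization with generators $x^\pm_{i,r}$, $h_{i,s}$, $K_i^{\pm1}$, $\gamma^{\pm1/2}$ (central), $D^{\pm1}$; the $x^-$ satisfy $x^-_{i,k+1}x^-_{j,l}-q^{-(\alpha_i|\alpha_j)}x^-_{j,l}x^-_{i,k+1}=q^{-(\alpha_i|\alpha_j)}x^-_{i,k}x^-_{j,l+1}-x^-_{j,l+1}x^-_{i,k}$. Let $\mathcal N_q^-$ be the subalgebra generated by $\gamma^{\pm1/2}$ and all $x^-_{i,l}$. Let $\delta(z)=\sum_{k\in\mathbb Z}z^k$; let $g_{ij}(t)$ be the Taylor series at $t=0$ of $(q^{(\alpha_i|\alpha_j)}t-1)/(t-q^{(\alpha_i|\alpha_j)})$ and $g_{ij,q^{-1}}(t)$ the same with $q$ replaced by $q^{-1}$. Put $x^-_i(v)=\sum_{m}x^-_{i,m}v^{-m}$. Operators $\Omega_{\psi_i}(l),\Omega_{\phi_i}(l):\mathcal N_q^-\to\mathcal N_q^-$ ($l\in\mathbb Z$, $1\le i\le N$), with generating series $\Omega_{\psi_i}(u)=\sum_l\Omega_{\psi_i}(l)u^{-l}$, $\Omega_{\phi_i}(u)=\sum_l\Omega_{\phi_i}(l)u^{-l}$, are defined as follows: they commute with multiplication by $\gamma^{\pm1/2}$,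 kill $1$, and for $\bar P=x^-_{j_1}(v_1)\cdots x^-_{j_k}(v_k)$ (a generating series whose coefficients are the monomials $x^-_{j_1,n_1}\cdots x^-_{j_k,n_k}$), with $\bar P_l$ the product with the $l$-th factor omitted, $\Omega_{\psi_i}(u)(\bar P)=\sum_{l=1}^k\delta_{i,j_l}\prod_{m=1}^{l-1}g_{i,j_m,q^{-1}}(v_m/v_l)\,\bar P_l\,\delta(u/v_l\gamma)$ and $\Omega_{\phi_i}(u)(\bar P)=\sum_{l=1}^k\delta_{i,j_l}\prod_{m=1}^{l-1}g_{i,j_m}(v_l/v_m)\,\bar P_l\,\delta(u\gamma/v_l)$. *)

theory Defs
  imports "HOL-Computational_Algebra.Polynomial"
          "HOL-Computational_Algebra.Fraction_Field"
          "HOL-Computational_Algebra.Formal_Power_Series"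
          "HOL-Combinatorics.Permutations"
begin

text \<open>B i j stands for the invariant form value (alpha_i | alpha_j), i, j in {1..N},
  normalized so that short simple roots have squared length 2.  The conditions below
  (symmetric, positive definite, generalized-Cartan integrality, indecomposable) say
  exactly that B is the normalized symmetrized Cartan matrix of a finite-dimensional
  complex simple Lie algebra of rank N.\<close>

definition simple_form :: "nat \<Rightarrow> (nat \<Rightarrow> nat \<Rightarrow> int) \<Rightarrow> bool" where
  "simple_form N B \<longleftrightarrow>
     N \<ge> 1 \<and>
     (\<forall>i\<in>{1..N}. \<forall>j\<in>{1..N}. B i j = B j i) \<and>
     (\<forall>i\<in>{1..N}. B i i > 0 \<and> even (B i i)) \<and>
     (\<exists>i\<in>{1..N}. B i i = 2) \<and>
     (\<forall>i\<in>{1..N}. \<forall>j\<in>{1..N}. i \<noteq> j \<longrightarrow> B i j \<le> 0 \<and> B i i dvd 2 * B i j) \<and>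
     (\<forall>x :: nat \<Rightarrow> real. (\<exists>i\<in>{1..N}. x i \<noteq> 0) \<longrightarrow>
         (\<Sum>i=1..N. \<Sum>j=1..N. x i * of_int (B i j) * x j) > 0) \<and>
     (\<forall>S. S \<subseteq> {1..N} \<and> S \<noteq> {} \<and> S \<noteq> {1..N} \<longrightarrow>
         (\<exists>i\<in>S. \<exists>j\<in>{1..N} - S. B i j \<noteq> 0))"

definition cartan :: "(nat \<Rightarrow> nat \<Rightarrow> int) \<Rightarrow> nat \<Rightarrow> nat \<Rightarrow> int" where
  "cartan B i j = (2 * B i j) div B i i"

type_synonym F = "complex poly fract"

definition qh :: F where "qh = Fract [:0, 1:] 1"     \<comment> \<open>q^(1/2)\<close>
definition qq :: F where "qq = qh ^ 2"
definition qpow :: "int \<Rightarrow> F" where "qpow n = qq powi n"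
definition qi :: "(nat \<Rightarrow> nat \<Rightarrow> int) \<Rightarrow> nat \<Rightarrow> F" where
  "qi B i = qh powi (B i i)"

definition qint :: "F \<Rightarrow> int \<Rightarrow> F" where
  "qint t n = (t powi n - t powi (- n)) / (t - inverse t)"
definition qfact :: "F \<Rightarrow> nat \<Rightarrow> F" where
  "qfact t n = (\<Prod>k\<in>{1..n}. qint t (int k))"
definition qbin :: "F \<Rightarrow> nat \<Rightarrow> nat \<Rightarrow> F" where
  "qbin t m k = qfact t m / (qfact t k * qfact t (m - k))"

text \<open>Taylor coefficients at t = 0 of (Q t - 1)/(t - Q); with Q = q^((alpha_i|alpha_j)) this is
  g_ij, with Q = q^(-(alpha_i|alpha_j)) it is g_{ij,q^{-1}}.\<close>
definition gser :: "F \<Rightarrow> F fps" where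
  "gser Q = (fps_const Q * fps_X - 1) * inverse (fps_X - fps_const Q)"
definition gcoef :: "F \<Rightarrow> nat \<Rightarrow> F" where
  "gcoef Q n = fps_nth (gser Q) n"

datatype gen = Xp nat int | Xm nat int | Hg nat int | Kg nat | Kinv nat
  | Gh | Ghinv | Dg | Dinv
  \<comment> \<open>x^+_{i,r}, x^-_{i,r}, h_{i,s}, K_i, K_i^{-1}, gamma^{1/2}, gamma^{-1/2}, D, D^{-1}\<close>

fun valid_gen :: "nat \<Rightarrow> gen \<Rightarrow> bool" where
  "valid_gen N (Xp i r) = (i \<in> {1..N})"
| "valid_gen N (Xm i r) = (i \<in> {1..N})"
| "valid_gen N (Hg i s) = (i \<in> {1..N} \<and> s \<noteq> 0)"
| "valid_gen N (Kg i) = (i \<in> {1..N})"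
| "valid_gen N (Kinv i) = (i \<in> {1..N})"
| "valid_gen N _ = True"

text \<open>Elements of the free associative algebra over F: finitely supported functions on words.
  The product is concatenation convolution.\<close>
type_synonym elt = "gen list \<Rightarrow> F"

definition mon :: "gen list \<Rightarrow> elt" where "mon w = (\<lambda>v. if v = w then 1 else 0)"
definition fzero :: elt where "fzero = (\<lambda>_. 0)"
definition fone :: elt where "fone = mon []"
definition fadd :: "elt \<Rightarrow> elt \<Rightarrow> elt" where "fadd p q = (\<lambda>w. p w + q w)"
definition fsub :: "elt \<Rightarrow> elt \<Rightarrow> elt" where "fsub p q = (\<lambda>w. p w - q w)"
definition fsmul :: "F \<Rightarrow> elt \<Rightarrow> elt" where "fsmul c p = (\<lambda>w. c * p w)"
definition fmul :: "elt \<Rightarrow> elt \<Rightarrow> elt" where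
  "fmul p q = (\<lambda>w. \<Sum>i\<in>{0..length w}. p (take i w) * q (drop i w))"
definition fsum :: "('a \<Rightarrow> elt) \<Rightarrow> 'a set \<Rightarrow> elt" where
  "fsum f A = (\<lambda>w. \<Sum>x\<in>A. f x w)"
definition fprod :: "elt list \<Rightarrow> elt" where "fprod ps = foldr fmul ps fone"
definition fpow :: "elt \<Rightarrow> nat \<Rightarrow> elt" where "fpow p n = (fmul p ^^ n) fone"
definition gn :: "gen \<Rightarrow> elt" where "gn g = mon [g]"
definition comm :: "elt \<Rightarrow> elt \<Rightarrow> elt" where "comm a b = fsub (fmul a b) (fmul b a)"

definition xp :: "nat \<Rightarrow> int \<Rightarrow> elt" where "xp i r = gn (Xp i r)"
definition xm :: "nat \<Rightarrow> int \<Rightarrow> elt" where "xm i r = gn (Xm i r)"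

text \<open>gpow k = (gamma^{1/2})^k, k an integer; so gamma^n = gpow (2 n).\<close>
definition gpow :: "int \<Rightarrow> elt" where
  "gpow k = (if k \<ge> 0 then fpow (gn Gh) (nat k) else fpow (gn Ghinv) (nat (- k)))"

text \<open>Coefficient of z^r in exp(c * sum_{k>=1} A_k z^k), computed in formal power series
  over the free algebra.\<close>
definition comps_list :: "nat \<Rightarrow> nat list set" where
  "comps_list r = {ks. (\<forall>k\<in>set ks. k \<ge> 1) \<and> sum_list ks = r}"
definition expc :: "F \<Rightarrow> (nat \<Rightarrow> elt) \<Rightarrow> nat \<Rightarrow> elt" where
  "expc c A r = fsum (\<lambda>ks. fsmul (c ^ length ks / of_nat (fact (length ks))) (fprod (map A ks)))
                     (comps_list r)"

text \<open>psi_i(z) = sum_{r>=0} psi_{i,r} z^{-r} = K_i exp((q_i - q_i^{-1}) sum_{k>0} h_{i,k} z^{-k}),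
  phi_i(z) = sum_{r>=0} phi_{i,-r} z^{r} = K_i^{-1} exp(-(q_i - q_i^{-1}) sum_{k>0} h_{i,-k} z^{k}).\<close>
definition psi :: "(nat \<Rightarrow> nat \<Rightarrow> int) \<Rightarrow> nat \<Rightarrow> int \<Rightarrow> elt" where
  "psi B i r = (if r < 0 then fzero else
     fmul (gn (Kg i)) (expc (qi B i - inverse (qi B i)) (\<lambda>k. gn (Hg i (int k))) (nat r)))"
definition phi :: "(nat \<Rightarrow> nat \<Rightarrow> int) \<Rightarrow> nat \<Rightarrow> int \<Rightarrow> elt" where
  "phi B i r = (if r > 0 then fzero else
     fmul (gn (Kinv i)) (expc (- (qi B i - inverse (qi B i))) (\<lambda>k. gn (Hg i (- int k))) (nat (- r))))"

definition serre_elt :: "(nat \<Rightarrow> nat \<Rightarrow> int) \<Rightarrow> (nat \<Rightarrow> int \<Rightarrow> elt) \<Rightarrow> nat \<Rightarrow> nat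
    \<Rightarrow> (nat \<Rightarrow> int) \<Rightarrow> int \<Rightarrow> elt" where
  "serre_elt B x i j rs l =
     (let m = nat (1 - cartan B i j) in
      fsum (\<lambda>\<sigma>. fsum (\<lambda>k. fsmul ((-1) ^ k * qbin (qi B i) m k)
                 (fprod (map (\<lambda>t. x i (rs (\<sigma> t))) [0..<k] @ [x j l]
                         @ map (\<lambda>t. x i (rs (\<sigma> t))) [k..<m]))) {0..m})
           {\<sigma>. \<sigma> permutes {..<m}})"

definition rels :: "nat \<Rightarrow> (nat \<Rightarrow> nat \<Rightarrow> int) \<Rightarrow> elt set" where
  "rels N B =
     \<comment> \<open>gamma^{1/2} central and invertible\<close>
     {comm (gn Gh) (gn g) | g. valid_gen N g}
   \<union> {fsub (fmul (gn Gh) (gn Ghinv)) fone, fsub (fmul (gn Ghinv) (gn Gh)) fone}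
     \<comment> \<open>K_i, D invertible; K's commute with each other, with D and with h's\<close>
   \<union> {fsub (fmul (gn (Kg i)) (gn (Kinv i))) fone | i. i \<in> {1..N}}
   \<union> {fsub (fmul (gn (Kinv i)) (gn (Kg i))) fone | i. i \<in> {1..N}}
   \<union> {fsub (fmul (gn Dg) (gn Dinv)) fone, fsub (fmul (gn Dinv) (gn Dg)) fone}
   \<union> {comm (gn (Kg i)) (gn (Kg j)) | i j. i \<in> {1..N} \<and> j \<in> {1..N}}
   \<union> {comm (gn (Kg i)) (gn Dg) | i. i \<in> {1..N}}
   \<union> {comm (gn (Kg i)) (gn (Hg j s)) | i j s. i \<in> {1..N} \<and> j \<in> {1..N} \<and> s \<noteq> 0}
     \<comment> \<open>D x^{+-}_{i,k} D^{-1} = q^k x^{+-}_{i,k},  D h_{i,k} D^{-1} = q^k h_{i,k}\<close>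
   \<union> {fsub (fprod [gn Dg, gn g, gn Dinv]) (fsmul (qpow k) (gn g)) | g i k.
        i \<in> {1..N} \<and> (g = Xp i k \<or> g = Xm i k \<or> (g = Hg i k \<and> k \<noteq> 0))}
     \<comment> \<open>K_i x^{+-}_{j,k} K_i^{-1} = q^{+-(alpha_i|alpha_j)} x^{+-}_{j,k}\<close>
   \<union> {fsub (fprod [gn (Kg i), xp j k, gn (Kinv i)]) (fsmul (qpow (B i j)) (xp j k)) | i j k.
        i \<in> {1..N} \<and> j \<in> {1..N}}
   \<union> {fsub (fprod [gn (Kg i), xm j k, gn (Kinv i)]) (fsmul (qpow (- B i j)) (xm j k)) | i j k.
        i \<in> {1..N} \<and> j \<in> {1..N}}
     \<comment> \<open>[h_{i,k}, h_{j,l}] = delta_{k+l,0} [k a_ij]_{q_i}/k (gamma^k - gamma^{-k})/(q_j - q_j^{-1})\<close>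
   \<union> {fsub (comm (gn (Hg i k)) (gn (Hg j l)))
          (if k + l = 0 then
             fsmul ((qpow (k * B i j) - qpow (- k * B i j)) /
                    (of_int k * (qi B i - inverse (qi B i)) * (qi B j - inverse (qi B j))))
                   (fsub (gpow (2 * k)) (gpow (- 2 * k)))
           else fzero) | i j k l. i \<in> {1..N} \<and> j \<in> {1..N} \<and> k \<noteq> 0 \<and> l \<noteq> 0}
     \<comment> \<open>[h_{i,k}, x^{+-}_{j,l}] = +- [k a_ij]_{q_i}/k gamma^{-+|k|/2} x^{+-}_{j,k+l}\<close>
   \<union> {fsub (comm (gn (Hg i k)) (xp j l))
          (fsmul ((qpow (k * B i j) - qpow (- k * B i j)) / (of_int k * (qi B i - inverse (qi B i))))
                 (fmul (gpow (- \<bar>k\<bar>)) (xp j (k + l))))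
        | i j k l. i \<in> {1..N} \<and> j \<in> {1..N} \<and> k \<noteq> 0}
   \<union> {fsub (comm (gn (Hg i k)) (xm j l))
          (fsmul (- ((qpow (k * B i j) - qpow (- k * B i j)) / (of_int k * (qi B i - inverse (qi B i)))))
                 (fmul (gpow \<bar>k\<bar>) (xm j (k + l))))
        | i j k l. i \<in> {1..N} \<and> j \<in> {1..N} \<and> k \<noteq> 0}
     \<comment> \<open>x^{+-}_{i,k+1} x^{+-}_{j,l} - q^{+-(ai|aj)} x^{+-}_{j,l} x^{+-}_{i,k+1}
         = q^{+-(ai|aj)} x^{+-}_{i,k} x^{+-}_{j,l+1} - x^{+-}_{j,l+1} x^{+-}_{i,k}\<close>
   \<union> {fsub (fsub (fmul (xp i (k + 1)) (xp j l)) (fsmul (qpow (B i j)) (fmul (xp j l) (xp i (k + 1)))))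
          (fsub (fsmul (qpow (B i j)) (fmul (xp i k) (xp j (l + 1)))) (fmul (xp j (l + 1)) (xp i k)))
        | i j k l. i \<in> {1..N} \<and> j \<in> {1..N}}
   \<union> {fsub (fsub (fmul (xm i (k + 1)) (xm j l)) (fsmul (qpow (- B i j)) (fmul (xm j l) (xm i (k + 1)))))
          (fsub (fsmul (qpow (- B i j)) (fmul (xm i k) (xm j (l + 1)))) (fmul (xm j (l + 1)) (xm i k)))
        | i j k l. i \<in> {1..N} \<and> j \<in> {1..N}}
     \<comment> \<open>[x^+_{i,k}, x^-_{j,l}] = delta_ij (gamma^{(k-l)/2} psi_{i,k+l} - gamma^{(l-k)/2} phi_{i,k+l})/(q_i - q_i^{-1})\<close>
   \<union> {fsub (comm (xp i k) (xm j l))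
          (if i = j then
             fsmul (inverse (qi B i - inverse (qi B i)))
               (fsub (fmul (gpow (k - l)) (psi B i (k + l))) (fmul (gpow (l - k)) (phi B i (k + l))))
           else fzero) | i j k l. i \<in> {1..N} \<and> j \<in> {1..N}}
     \<comment> \<open>Serre relations, i ~= j, m = 1 - a_ij\<close>
   \<union> {serre_elt B xp i j rs l | i j rs l. i \<in> {1..N} \<and> j \<in> {1..N} \<and> i \<noteq> j}
   \<union> {serre_elt B xm i j rs l | i j rs l. i \<in> {1..N} \<and> j \<in> {1..N} \<and> i \<noteq> j}"

inductive_set rel_ideal :: "nat \<Rightarrow> (nat \<Rightarrow> nat \<Rightarrow> int) \<Rightarrow> elt set" for N B where
  gen: "r \<in> rels N B \<Longrightarrow> r \<in> rel_ideal N B"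
| zero: "fzero \<in> rel_ideal N B"
| add: "a \<in> rel_ideal N B \<Longrightarrow> b \<in> rel_ideal N B \<Longrightarrow> fadd a b \<in> rel_ideal N B"
| smul: "a \<in> rel_ideal N B \<Longrightarrow> fsmul c a \<in> rel_ideal N B"
| lmul: "a \<in> rel_ideal N B \<Longrightarrow> valid_gen N g \<Longrightarrow> fmul (gn g) a \<in> rel_ideal N B"
| rmul: "a \<in> rel_ideal N B \<Longrightarrow> valid_gen N g \<Longrightarrow> fmul a (gn g) \<in> rel_ideal N B"

definition ueq :: "nat \<Rightarrow> (nat \<Rightarrow> nat \<Rightarrow> int) \<Rightarrow> elt \<Rightarrow> elt \<Rightarrow> bool" where
  "ueq N B a b \<longleftrightarrow> fsub a b \<in> rel_ideal N B"

definition nword :: "nat \<Rightarrow> gen list \<Rightarrow> bool" where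
  "nword N w \<longleftrightarrow> (\<forall>g\<in>set w. g = Gh \<or> g = Ghinv \<or> (\<exists>i l. g = Xm i l \<and> i \<in> {1..N}))"

text \<open>Free-algebra representatives of elements of N_q^-: linear combinations of words in
  gamma^{+-1/2} and the x^-_{i,l}.\<close>
definition nsub :: "nat \<Rightarrow> elt set" where
  "nsub N = {p. finite {w. p w \<noteq> 0} \<and> (\<forall>w. p w \<noteq> 0 \<longrightarrow> nword N w)}"

fun gexp :: "gen list \<Rightarrow> int" where
  "gexp [] = 0"
| "gexp (Gh # w) = gexp w + 1"
| "gexp (Ghinv # w) = gexp w - 1"
| "gexp (_ # w) = gexp w"

fun xpart :: "gen list \<Rightarrow> (nat \<times> int) list" where
  "xpart [] = []"
| "xpart (Xm i l # w) = (i, l) # xpart w"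
| "xpart (_ # w) = xpart w"

definition xmon :: "(nat \<times> int) list \<Rightarrow> elt" where
  "xmon xs = mon (map (\<lambda>(i, l). Xm i l) xs)"

definition comps_fun :: "nat \<Rightarrow> int \<Rightarrow> (nat \<Rightarrow> nat) set" where
  "comps_fun p s = {a. (\<forall>m\<ge>p. a m = 0) \<and> int (\<Sum>m<p. a m) = s}"

text \<open>Coefficient of u^{-r} of Omega_{psi_i}(u), applied to x^-_{j_1,n_1}...x^-_{j_k,n_k}
  (extracted from the defining generating-series formula).\<close>
definition om_psi_mon :: "(nat \<Rightarrow> nat \<Rightarrow> int) \<Rightarrow> nat \<Rightarrow> int \<Rightarrow> (nat \<times> int) list \<Rightarrow> elt" where
  "om_psi_mon B i r xs =
     fsum (\<lambda>p. if fst (xs ! p) = i then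
        fmul (gpow (2 * r))
          (fsum (\<lambda>a. fsmul (\<Prod>m<p. gcoef (qpow (- B i (fst (xs ! m)))) (a m))
                    (xmon (map (\<lambda>m. (fst (xs ! m), snd (xs ! m) + int (a m)))
                               (filter (\<lambda>m. m \<noteq> p) [0..<length xs]))))
                (comps_fun p (snd (xs ! p) + r)))
      else fzero) {..<length xs}"

definition om_phi_mon :: "(nat \<Rightarrow> nat \<Rightarrow> int) \<Rightarrow> nat \<Rightarrow> int \<Rightarrow> (nat \<times> int) list \<Rightarrow> elt" where
  "om_phi_mon B i r xs =
     fsum (\<lambda>p. if fst (xs ! p) = i then
        fmul (gpow (- 2 * r))
          (fsum (\<lambda>a. fsmul (\<Prod>m<p. gcoef (qpow (B i (fst (xs ! m)))) (a m))
                    (xmon (map (\<lambda>m. (fst (xs ! m), snd (xs ! m) - int (a m)))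
                               (filter (\<lambda>m. m \<noteq> p) [0..<length xs]))))
                (comps_fun p (- snd (xs ! p) - r)))
      else fzero) {..<length xs}"

text \<open>Linear extension of an operator on words; on words, Omega commutes with gamma^{+-1/2}.\<close>
definition linext :: "(gen list \<Rightarrow> elt) \<Rightarrow> elt \<Rightarrow> elt" where
  "linext f p = fsum (\<lambda>w. fsmul (p w) (f w)) {w. p w \<noteq> 0}"

definition OmPsi :: "(nat \<Rightarrow> nat \<Rightarrow> int) \<Rightarrow> nat \<Rightarrow> int \<Rightarrow> elt \<Rightarrow> elt" where
  "OmPsi B i r = linext (\<lambda>w. fmul (gpow (gexp w)) (om_psi_mon B i r (xpart w)))"
definition OmPhi :: "(nat \<Rightarrow> nat \<Rightarrow> int) \<Rightarrow> nat \<Rightarrow> int \<Rightarrow> elt \<Rightarrow> elt" where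
  "OmPhi B i r = linext (\<lambda>w. fmul (gpow (gexp w)) (om_phi_mon B i r (xpart w)))"

end

theory Submission
  imports Defs "HOL-Library.Poly_Mapping"
begin

text \<open>
  Only the relations making \<open>\<gamma>^(1/2)\<close> central and invertible are needed.  Modulo them
  every word in the generators of \<open>N_q^-\<close> equals a normal-ordered monomial
  \<open>\<gamma>^(e/2) x_{j1,n1} \<cdots> x_{jk,nk}\<close>, so an element is determined by its coordinates, a
  finitely supported function of \<open>(e, [(j1,n1), \<dots>, (jk,nk)])\<close>.  On coordinates the operators
  \<open>\<Omega>_\<psi>\<close> and \<open>\<Omega>_\<phi>\<close> are handled together, distinguished by a sign \<open>\<sigma> = \<plusminus>1\<close>.

  Peeling the first letter \<open>x_{i,n}\<close> off a monomial reproduces the defining formula: the letter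
  itself gives the \<open>\<delta>\<close>-term and contributes one more factor \<open>g\<close> to every other term, which
  gives the first two relations.  For the quadratic relations it suffices, by linearity, to treat
  a single monomial, by induction on its length.  Expanding \<open>\<Omega>(\<Omega>(x_{i,n} Y))\<close> twice gives a
  \<open>\<delta>\<close>-term of the inner operator, a \<open>\<delta>\<close>-term of the outer one and a double sum of terms
  \<open>x \<Omega>(\<Omega> Y)\<close>.  The double sums match by induction, and the two kinds of \<open>\<delta>\<close>-terms match
  crosswise because the Taylor coefficients of \<open>g\<close> obey the recursion coming from
  \<open>(t - Q) g(t) = Q t - 1\<close>.
\<close>

abbreviation lookup where "lookup \<equiv> Poly_Mapping.lookup"
abbreviation keys where "keys \<equiv> Poly_Mapping.keys"
abbreviation single where "single \<equiv> Poly_Mapping.single"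

definition vscale :: "'b::comm_ring_1 \<Rightarrow> ('k \<Rightarrow>\<^sub>0 'b) \<Rightarrow> ('k \<Rightarrow>\<^sub>0 'b)" where
  "vscale c v = Poly_Mapping.map (\<lambda>x. c * x) v"

lemma lookup_vscale [simp]: "lookup (vscale c v) k = c * lookup v k"
  by (simp add: vscale_def map.rep_eq when_def)

lemma vscale_add: "vscale c (v + w) = vscale c v + vscale c w"
  by (rule poly_mapping_eqI) (simp add: lookup_add algebra_simps)
lemma vscale_diff: "vscale c (v - w) = vscale c v - vscale c w"
  by (rule poly_mapping_eqI) (simp add: lookup_minus algebra_simps)
lemma vscale_zero [simp]: "vscale c 0 = 0"
  by (rule poly_mapping_eqI) simp
lemma vscale_0 [simp]: "vscale 0 v = 0"
  by (rule poly_mapping_eqI) simp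
lemma vscale_1 [simp]: "vscale 1 v = v"
  by (rule poly_mapping_eqI) simp
lemma vscale_vscale [simp]: "vscale c (vscale d v) = vscale (c * d) v"
  by (rule poly_mapping_eqI) simp
lemma vscale_add_left: "vscale (c + d) v = vscale c v + vscale d v"
  by (rule poly_mapping_eqI) (simp add: lookup_add algebra_simps)
lemma vscale_diff_left: "vscale (c - d) v = vscale c v - vscale d v"
  by (rule poly_mapping_eqI) (simp add: lookup_minus algebra_simps)
lemma vscale_sum: "vscale c (sum f A) = (\<Sum>a\<in>A. vscale c (f a))"
  by (rule poly_mapping_eqI) (simp add: lookup_sum sum_distrib_left)
lemma vscale_single: "vscale c (single k d) = single k (c * d)"
  by (rule poly_mapping_eqI) (simp add: lookup_single when_def)

definition lin_ext :: "('k \<Rightarrow> 'j \<Rightarrow>\<^sub>0 'b::comm_ring_1) \<Rightarrow> ('k \<Rightarrow>\<^sub>0 'b) \<Rightarrow> ('j \<Rightarrow>\<^sub>0 'b)" where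
  "lin_ext f v = (\<Sum>k\<in>keys v. vscale (lookup v k) (f k))"

lemma lin_ext_superset:
  assumes "finite S" "keys v \<subseteq> S"
  shows "lin_ext f v = (\<Sum>k\<in>S. vscale (lookup v k) (f k))"
  unfolding lin_ext_def
  by (rule sum.mono_neutral_left) (use assms in \<open>auto simp: in_keys_iff\<close>)

lemma lin_ext_add: "lin_ext f (v + w) = lin_ext f v + lin_ext f w"
proof -
  let ?S = "keys v \<union> keys w"
  have "lin_ext f (v + w) = (\<Sum>k\<in>?S. vscale (lookup (v + w) k) (f k))"
    by (rule lin_ext_superset) (auto dest: subsetD[OF keys_add])
  also have "\<dots> = (\<Sum>k\<in>?S. vscale (lookup v k) (f k)) + (\<Sum>k\<in>?S. vscale (lookup w k) (f k))"
    by (simp add: lookup_add vscale_add_left sum.distrib)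
  also have "\<dots> = lin_ext f v + lin_ext f w"
    by (simp add: lin_ext_superset[symmetric])
  finally show ?thesis .
qed

lemma lin_ext_zero [simp]: "lin_ext f 0 = 0"
  by (simp add: lin_ext_def)

lemma lin_ext_vscale: "lin_ext f (vscale c v) = vscale c (lin_ext f v)"
proof -
  have "lin_ext f (vscale c v) = (\<Sum>k\<in>keys v. vscale (lookup (vscale c v) k) (f k))"
    by (rule lin_ext_superset) (auto simp: in_keys_iff)
  then show ?thesis by (simp add: lin_ext_def vscale_sum)
qed

lemma lin_ext_uminus: "lin_ext f (- v) = - lin_ext f v"
  using lin_ext_add[of f v "- v"] by (simp add: eq_neg_iff_add_eq_0 add.commute)

lemma lin_ext_diff: "lin_ext f (v - w) = lin_ext f v - lin_ext f w"
  using lin_ext_add[of f v "- w"] by (simp add: lin_ext_uminus)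

lemma lin_ext_sum: "lin_ext f (sum g A) = (\<Sum>a\<in>A. lin_ext f (g a))"
  by (induction A rule: infinite_finite_induct) (auto simp: lin_ext_add)

lemma lin_ext_single [simp]: "lin_ext f (single k c) = vscale c (f k)"
  by (simp add: lin_ext_def)

lemma lin_ext_lin_ext: "lin_ext f (lin_ext g v) = lin_ext (\<lambda>k. lin_ext f (g k)) v"
proof -
  have "lin_ext f (lin_ext g v) = lin_ext f (\<Sum>k\<in>keys v. vscale (lookup v k) (g k))" by (simp only: lin_ext_def)
  also have "\<dots> = (\<Sum>k\<in>keys v. vscale (lookup v k) (lin_ext f (g k)))" by (simp add: lin_ext_sum lin_ext_vscale)
  also have "\<dots> = lin_ext (\<lambda>k. lin_ext f (g k)) v" by (simp only: lin_ext_def)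
  finally show ?thesis .
qed

lemma lin_ext_cong: "(\<And>k. k \<in> keys v \<Longrightarrow> f k = g k) \<Longrightarrow> lin_ext f v = lin_ext g v"
  by (simp add: lin_ext_def)

lemma lin_ext_basis: "lin_ext (\<lambda>k. single k 1) v = v"
proof (rule poly_mapping_eqI)
  fix k
  have "lookup (lin_ext (\<lambda>k. single k 1) v) k = (\<Sum>x\<in>keys v. lookup v x * (1 when x = k))"
    by (simp add: lin_ext_def lookup_sum lookup_single)
  also have "\<dots> = lookup v k"
    by (cases "k \<in> keys v") (auto simp: when_def in_keys_iff if_distrib sum.delta' cong: if_cong
          intro!: sum.neutral)
  finally show "lookup (lin_ext (\<lambda>k. single k 1) v) k = lookup v k" .
qed


definition finsupp :: "elt \<Rightarrow> bool" where "finsupp X \<longleftrightarrow> finite {w. X w \<noteq> 0}"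
definition nword_supp :: "nat \<Rightarrow> elt \<Rightarrow> bool" where "nword_supp N X \<longleftrightarrow> (\<forall>w. X w \<noteq> 0 \<longrightarrow> nword N w)"
lemma nsub_iff: "X \<in> nsub N \<longleftrightarrow> finsupp X \<and> nword_supp N X"
  by (simp add: nsub_def finsupp_def nword_supp_def)

lemma fmul_mon_left:
  "fmul (mon u) Y = (\<lambda>x. if take (length u) x = u then Y (drop (length u) x) else 0)"
proof (rule ext)
  fix x
  show "fmul (mon u) Y x = (if take (length u) x = u then Y (drop (length u) x) else 0)"
  proof (cases "take (length u) x = u")
    case True
    then have le: "length u \<le> length x" by (metis length_take min.absorb_iff1 nat_le_linear)
    have "fmul (mon u) Y x = (\<Sum>i\<in>{0..length x}. if i = length u then Y (drop (length u) x) else 0)"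
      unfolding fmul_def mon_def
      by (rule sum.cong) (use True le in \<open>auto simp: min_def split: if_splits\<close>)
    also have "\<dots> = Y (drop (length u) x)" using le by simp
    finally show ?thesis using True by simp
  next
    case False
    have "fmul (mon u) Y x = 0"
      unfolding fmul_def mon_def
    proof (rule sum.neutral, intro ballI)
      fix i assume i: "i \<in> {0..length x}"
      have "take i x \<noteq> u"
      proof
        assume h: "take i x = u"
        then have "length u = i" using i by auto
        then show False using h False by simp
      qed
      then show "(if take i x = u then 1 else 0) * Y (drop i x) = 0" by simp
    qed
    then show ?thesis using False by simp
  qed
qed

lemma fmul_mon_right:
  "fmul Y (mon v) = (\<lambda>x. if length v \<le> length x \<and> drop (length x - length v) x = v
       then Y (take (length x - length v) x) else 0)"
proof (rule ext)
  fix x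
  show "fmul Y (mon v) x = (if length v \<le> length x \<and> drop (length x - length v) x = v
       then Y (take (length x - length v) x) else 0)"
  proof (cases "length v \<le> length x \<and> drop (length x - length v) x = v")
    case True
    have "fmul Y (mon v) x = (\<Sum>i\<in>{0..length x}. if i = length x - length v then Y (take (length x - length v) x) else 0)"
      unfolding fmul_def mon_def
      by (rule sum.cong) (use True in \<open>auto simp: min_def split: if_splits\<close>)
    also have "\<dots> = Y (take (length x - length v) x)" by simp
    finally show ?thesis using True by simp
  next
    case False
    have "fmul Y (mon v) x = 0"
      unfolding fmul_def mon_def
    proof (rule sum.neutral, intro ballI)
      fix i assume i: "i \<in> {0..length x}"
      have "drop i x \<noteq> v"
      proof
        assume h: "drop i x = v"
        then have "length v = length x - i" by auto
        then show False using h False i by auto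
      qed
      then show "Y (take i x) * (if drop i x = v then 1 else 0) = 0" by simp
    qed
    then show ?thesis by (simp only: if_not_P[OF False])
  qed
qed

lemma fmul_fone_right [simp]: "fmul Y fone = Y"
  by (rule ext) (simp add: fone_def fmul_mon_right)

lemma fmul_fone_left [simp]: "fmul fone Y = Y"
  by (rule ext) (simp add: fone_def fmul_mon_left)

lemma mon_mul: "fmul (mon u) (mon v) = mon (u @ v)"
proof (rule ext)
  fix x :: "gen list"
  show "fmul (mon u) (mon v) x = mon (u @ v) x"
  proof (cases "x = u @ v")
    case True then show ?thesis by (simp add: fmul_mon_left) (simp add: mon_def)
  next
    case False
    have "\<not> (take (length u) x = u \<and> drop (length u) x = v)"
      using False by (metis append_take_drop_id)
    then show ?thesis using False by (simp add: fmul_mon_left) (auto simp: mon_def)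
  qed
qed

lemma fmul_mon_left_append: "fmul (mon u) Y (u @ x) = Y x"
  by (simp add: fmul_mon_left)

lemma fmul_mon_left_eq_0: "(\<And>z. x \<noteq> u @ z) \<Longrightarrow> fmul (mon u) Y x = 0"
  by (auto simp: fmul_mon_left) (metis append_take_drop_id)

lemma fmul_mon_mon_left: "fmul (mon u) (fmul (mon v) Y) = fmul (mon (u @ v)) Y"
proof (rule ext)
  fix x :: "gen list"
  consider z where "x = u @ (v @ z)" | z where "x = u @ z" "\<And>z'. z \<noteq> v @ z'" | "\<And>z. x \<noteq> u @ z"
    by blast
  then show "fmul (mon u) (fmul (mon v) Y) x = fmul (mon (u @ v)) Y x"
  proof cases
    case 1
    then show ?thesis using fmul_mon_left_append[of "u @ v" Y z] by (simp add: fmul_mon_left_append)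
  next
    case 2
    have "fmul (mon u) (fmul (mon v) Y) x = fmul (mon v) Y z"
      using 2(1) by (simp add: fmul_mon_left_append)
    also have "\<dots> = 0" using 2(2) by (rule fmul_mon_left_eq_0)
    also have "\<dots> = fmul (mon (u @ v)) Y x"
      using 2 by (metis append.assoc append_same_eq same_append_eq fmul_mon_left_eq_0)
    finally show ?thesis .
  next
    case 3
    then have "fmul (mon u) (fmul (mon v) Y) x = 0" by (rule fmul_mon_left_eq_0)
    also have "\<dots> = fmul (mon (u @ v)) Y x"
      using 3 by (metis append.assoc fmul_mon_left_eq_0)
    finally show ?thesis .
  qed
qed

lemma fmul_mon_right_append: "fmul Y (mon v) (u @ v) = Y u"
  by (simp add: fmul_mon_right)

lemma fmul_mon_right_eq_0: "(\<And>u. x \<noteq> u @ v) \<Longrightarrow> fmul Y (mon v) x = 0"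
  by (auto simp: fmul_mon_right) (metis append_take_drop_id)

lemma fmul_mon_mon_right: "fmul (fmul Y (mon v)) (mon w) = fmul Y (mon (v @ w))"
proof (rule ext)
  fix x :: "gen list"
  consider u where "x = (u @ v) @ w" | u where "x = u @ w" "\<And>u'. u \<noteq> u' @ v" | "\<And>u. x \<noteq> u @ w"
    by blast
  then show "fmul (fmul Y (mon v)) (mon w) x = fmul Y (mon (v @ w)) x"
  proof cases
    case 1
    have "fmul (fmul Y (mon v)) (mon w) ((u @ v) @ w) = Y u"
      by (simp only: fmul_mon_right_append)
    moreover have "fmul Y (mon (v @ w)) ((u @ v) @ w) = Y u"
      using fmul_mon_right_append[of Y "v @ w" u] by simp
    ultimately show ?thesis using 1 by simp
  next
    case 2
    have "fmul (fmul Y (mon v)) (mon w) x = fmul Y (mon v) u"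
      using 2(1) by (simp add: fmul_mon_right_append)
    also have "\<dots> = 0" using 2(2) by (rule fmul_mon_right_eq_0)
    also have "\<dots> = fmul Y (mon (v @ w)) x"
      using 2 by (metis append.assoc append_same_eq fmul_mon_right_eq_0)
    finally show ?thesis .
  next
    case 3
    then have "fmul (fmul Y (mon v)) (mon w) x = 0" by (rule fmul_mon_right_eq_0)
    also have "\<dots> = fmul Y (mon (v @ w)) x"
      using 3 by (metis append.assoc fmul_mon_right_eq_0)
    finally show ?thesis .
  qed
qed

lemma fpow_gn: "fpow (gn g) n = mon (replicate n g)"
  by (induction n) (simp_all add: fpow_def fone_def gn_def mon_mul)

definition gamma_word :: "int \<Rightarrow> gen list" where
  "gamma_word k = (if k \<ge> 0 then replicate (nat k) Gh else replicate (nat (- k)) Ghinv)"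

lemma gpow_mon: "gpow k = mon (gamma_word k)"
  by (simp add: gpow_def gamma_word_def fpow_gn)

lemma fadd_apply [simp]: "fadd X Y w = X w + Y w" by (simp add: fadd_def)
lemma fsub_apply [simp]: "fsub X Y w = X w - Y w" by (simp add: fsub_def)
lemma fsmul_apply [simp]: "fsmul c X w = c * X w" by (simp add: fsmul_def)
lemma fsum_apply [simp]: "fsum f A w = (\<Sum>x\<in>A. f x w)" by (simp add: fsum_def)
lemma fzero_apply [simp]: "fzero w = 0" by (simp add: fzero_def)

lemma fmul_fsub_right: "fmul X (fsub Y Z) = fsub (fmul X Y) (fmul X Z)"
  by (rule ext) (simp add: fmul_def algebra_simps sum_subtractf)
lemma fmul_fsub_left: "fmul (fsub Y Z) X = fsub (fmul Y X) (fmul Z X)"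
  by (rule ext) (simp add: fmul_def algebra_simps sum_subtractf)
lemma fmul_fsmul_right: "fmul X (fsmul c Y) = fsmul c (fmul X Y)"
  by (rule ext) (simp add: fmul_def algebra_simps sum_distrib_left)
lemma fmul_fsum_right: "fmul X (fsum f A) = fsum (\<lambda>a. fmul X (f a)) A"
  by (rule ext) (simp add: fmul_def sum_distrib_left sum.swap[of _ A])
lemma elt_decomp:
  assumes "finsupp X"
  shows "X = fsum (\<lambda>w. fsmul (X w) (mon w)) {w. X w \<noteq> 0}"
proof (rule ext)
  fix x
  have "(\<Sum>w\<in>{w. X w \<noteq> 0}. X w * mon w x) = (\<Sum>w\<in>{w. X w \<noteq> 0}. if w = x then X x else 0)"
    by (rule sum.cong) (auto simp: mon_def)
  also have "\<dots> = X x" using assms by (simp add: finsupp_def)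
  finally show "X x = fsum (\<lambda>w. fsmul (X w) (mon w)) {w. X w \<noteq> 0} x" by simp
qed

lemma fmul_mon_left_decomp:
  assumes "finsupp Y"
  shows "fmul (mon u) Y = fsum (\<lambda>w. fsmul (Y w) (mon (u @ w))) {w. Y w \<noteq> 0}"
proof -
  have "fmul (mon u) Y = fmul (mon u) (fsum (\<lambda>w. fsmul (Y w) (mon w)) {w. Y w \<noteq> 0})"
    using elt_decomp[OF assms] by simp
  also have "\<dots> = fsum (\<lambda>w. fsmul (Y w) (mon (u @ w))) {w. Y w \<noteq> 0}"
    by (simp add: fmul_fsum_right fmul_fsmul_right mon_mul)
  finally show ?thesis .
qed

lemma fmul_decomp:
  assumes "finsupp X"
  shows "fmul X Y = fsum (\<lambda>w. fsmul (X w) (fmul (mon w) Y)) {w. X w \<noteq> 0}"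
proof -
  have "fmul X Y = fmul (fsum (\<lambda>w. fsmul (X w) (mon w)) {w. X w \<noteq> 0}) Y"
    using elt_decomp[OF assms] by simp
  also have "\<dots> = fsum (\<lambda>w. fsmul (X w) (fmul (mon w) Y)) {w. X w \<noteq> 0}"
  proof (rule ext)
    fix x
    have "fmul (fsum (\<lambda>w. fsmul (X w) (mon w)) {w. X w \<noteq> 0}) Y x
        = (\<Sum>i\<in>{0..length x}. \<Sum>w\<in>{w. X w \<noteq> 0}. X w * (mon w (take i x) * Y (drop i x)))"
      by (simp add: fmul_def sum_distrib_right mult.assoc)
    also have "\<dots> = (\<Sum>w\<in>{w. X w \<noteq> 0}. \<Sum>i\<in>{0..length x}. X w * (mon w (take i x) * Y (drop i x)))"
      by (rule sum.swap)
    also have "\<dots> = fsum (\<lambda>w. fsmul (X w) (fmul (mon w) Y)) {w. X w \<noteq> 0} x"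
      by (simp add: fmul_def sum_distrib_left)
    finally show "fmul (fsum (\<lambda>w. fsmul (X w) (mon w)) {w. X w \<noteq> 0}) Y x = fsum (\<lambda>w. fsmul (X w) (fmul (mon w) Y)) {w. X w \<noteq> 0} x" .
  qed
  finally show ?thesis .
qed

lemma finsupp_mon [simp]: "finsupp (mon w)"
  by (simp add: finsupp_def mon_def)
lemma finsupp_fzero [simp]: "finsupp fzero" by (simp add: finsupp_def)
lemma finsupp_fadd: "finsupp X \<Longrightarrow> finsupp Y \<Longrightarrow> finsupp (fadd X Y)"
  unfolding finsupp_def by (rule finite_subset[of _ "{w. X w \<noteq> 0} \<union> {w. Y w \<noteq> 0}"]) auto
lemma finsupp_fsub: "finsupp X \<Longrightarrow> finsupp Y \<Longrightarrow> finsupp (fsub X Y)"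
  unfolding finsupp_def by (rule finite_subset[of _ "{w. X w \<noteq> 0} \<union> {w. Y w \<noteq> 0}"]) auto
lemma finsupp_fsmul: "finsupp X \<Longrightarrow> finsupp (fsmul c X)"
  unfolding finsupp_def by (rule finite_subset[of _ "{w. X w \<noteq> 0}"]) auto
lemma finsupp_fsum: "finite A \<Longrightarrow> (\<And>a. a \<in> A \<Longrightarrow> finsupp (f a)) \<Longrightarrow> finsupp (fsum f A)"
proof (induction A rule: finite_induct)
  case empty then show ?case by (simp add: fsum_def finsupp_def)
next
  case (insert x F)
  have eq: "fsum f (insert x F) = fadd (f x) (fsum f F)"
    using insert by (simp add: fsum_def fadd_def)
  have "finsupp (fsum f F)" using insert.IH insert.prems by blast
  then have "finsupp (fadd (f x) (fsum f F))" using insert.prems by (intro finsupp_fadd) auto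
  then show ?case by (simp only: eq)
qed

lemma finsupp_fmul_mon: "finsupp Y \<Longrightarrow> finsupp (fmul (mon u) Y)"
  unfolding fmul_mon_left_decomp[of Y u] 
  by (rule finsupp_fsum) (use finsupp_def[of Y] in \<open>auto intro: finsupp_fsmul\<close>)
lemma finsupp_fmul: "finsupp X \<Longrightarrow> finsupp Y \<Longrightarrow> finsupp (fmul X Y)"
  unfolding fmul_decomp[of X Y]
  by (rule finsupp_fsum) (auto simp: finsupp_def[of X] intro: finsupp_fsmul finsupp_fmul_mon)
lemma finsupp_gpow [simp]: "finsupp (gpow k)" by (simp add: gpow_mon)

lemma nword_append [simp]: "nword N (u @ v) \<longleftrightarrow> nword N u \<and> nword N v"
  by (auto simp: nword_def)

lemma nword_supp_mon [simp]: "nword_supp N (mon w) \<longleftrightarrow> nword N w"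
  by (auto simp: nword_supp_def mon_def)
lemma nword_supp_fzero [simp]: "nword_supp N fzero" by (simp add: nword_supp_def)
lemma nword_supp_fadd: "nword_supp N X \<Longrightarrow> nword_supp N Y \<Longrightarrow> nword_supp N (fadd X Y)"
  unfolding nword_supp_def
proof (intro allI impI)
  fix w assume X: "\<forall>w. X w \<noteq> 0 \<longrightarrow> nword N w" and Y: "\<forall>w. Y w \<noteq> 0 \<longrightarrow> nword N w"
    and h: "fadd X Y w \<noteq> 0"
  then have "X w \<noteq> 0 \<or> Y w \<noteq> 0" by auto
  then show "nword N w" using X Y by blast
qed

lemma nword_supp_fsub: "nword_supp N X \<Longrightarrow> nword_supp N Y \<Longrightarrow> nword_supp N (fsub X Y)"
  unfolding nword_supp_def
proof (intro allI impI)
  fix w assume X: "\<forall>w. X w \<noteq> 0 \<longrightarrow> nword N w" and Y: "\<forall>w. Y w \<noteq> 0 \<longrightarrow> nword N w"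
    and h: "fsub X Y w \<noteq> 0"
  then have "X w \<noteq> 0 \<or> Y w \<noteq> 0" by auto
  then show "nword N w" using X Y by blast
qed

lemma nword_supp_fsmul: "nword_supp N X \<Longrightarrow> nword_supp N (fsmul c X)"
  by (auto simp: nword_supp_def)
lemma nword_supp_fsum: "(\<And>a. a \<in> A \<Longrightarrow> nword_supp N (f a)) \<Longrightarrow> nword_supp N (fsum f A)"
  unfolding nword_supp_def fsum_apply
proof (intro allI impI)
  fix w assume A: "\<And>a. a \<in> A \<Longrightarrow> \<forall>w. f a w \<noteq> 0 \<longrightarrow> nword N w" and h: "(\<Sum>x\<in>A. f x w) \<noteq> 0"
  have "\<exists>a\<in>A. f a w \<noteq> 0"
  proof (rule ccontr)
    assume "\<not> ?thesis"
    then have "(\<Sum>x\<in>A. f x w) = 0" by (intro sum.neutral) auto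
    with h show False by simp
  qed
  then obtain a where "a \<in> A" "f a w \<noteq> 0" by blast
  then show "nword N w" using A by blast
qed

lemma nword_supp_fmul: "nword_supp N X \<Longrightarrow> nword_supp N Y \<Longrightarrow> nword_supp N (fmul X Y)"
  unfolding nword_supp_def fmul_def
proof (intro allI impI)
  fix w assume X: "\<forall>w. X w \<noteq> 0 \<longrightarrow> nword N w" and Y: "\<forall>w. Y w \<noteq> 0 \<longrightarrow> nword N w"
    and s: "(\<Sum>i\<in>{0..length w}. X (take i w) * Y (drop i w)) \<noteq> 0"
  have "\<exists>i\<in>{0..length w}. X (take i w) * Y (drop i w) \<noteq> 0"
  proof (rule ccontr)
    assume "\<not> ?thesis"
    then have "(\<Sum>i\<in>{0..length w}. X (take i w) * Y (drop i w)) = 0" by (intro sum.neutral) auto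
    with s show False by simp
  qed
  then obtain i where "X (take i w) * Y (drop i w) \<noteq> 0" by blast
  then have "nword N (take i w)" "nword N (drop i w)" using X Y by auto
  then have "nword N (take i w @ drop i w)" by (simp only: nword_append) 
  then show "nword N w" by (simp only: append_take_drop_id)
qed

lemma nword_gamma_word [simp]: "nword N (gamma_word k)" by (auto simp: nword_def gamma_word_def)
lemma nword_supp_gpow [simp]: "nword_supp N (gpow k)" by (simp add: gpow_mon)

lemma nsub_fadd: "X \<in> nsub N \<Longrightarrow> Y \<in> nsub N \<Longrightarrow> fadd X Y \<in> nsub N"
  by (simp add: nsub_iff finsupp_fadd nword_supp_fadd)
lemma nsub_fsub: "X \<in> nsub N \<Longrightarrow> Y \<in> nsub N \<Longrightarrow> fsub X Y \<in> nsub N"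
  by (simp add: nsub_iff finsupp_fsub nword_supp_fsub)
lemma nsub_fsmul: "X \<in> nsub N \<Longrightarrow> fsmul c X \<in> nsub N"
  by (simp add: nsub_iff finsupp_fsmul nword_supp_fsmul)
lemma nsub_fsum: "finite A \<Longrightarrow> (\<And>a. a \<in> A \<Longrightarrow> f a \<in> nsub N) \<Longrightarrow> fsum f A \<in> nsub N"
  unfolding nsub_iff using finsupp_fsum[of A f] nword_supp_fsum[of A N f] by blast
lemma nsub_fmul: "X \<in> nsub N \<Longrightarrow> Y \<in> nsub N \<Longrightarrow> fmul X Y \<in> nsub N"
  by (simp add: nsub_iff finsupp_fmul nword_supp_fmul)
lemma nsub_mon [simp]: "mon w \<in> nsub N \<longleftrightarrow> nword N w" by (simp add: nsub_iff)
lemma nsub_fzero [simp]: "fzero \<in> nsub N" by (simp add: nsub_iff)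
lemma nsub_gpow [simp]: "gpow k \<in> nsub N" by (simp add: nsub_iff)
lemma nsub_xm: "i \<in> {1..N} \<Longrightarrow> xm i n \<in> nsub N"
  by (auto simp: xm_def gn_def nword_def)


section \<open>Normal form modulo the centrality of \<open>\<gamma>\<close>\<close>

definition valid_word :: "nat \<Rightarrow> gen list \<Rightarrow> bool" where
  "valid_word N w \<longleftrightarrow> (\<forall>g\<in>set w. valid_gen N g)"

lemma valid_word_append [simp]: "valid_word N (u @ v) \<longleftrightarrow> valid_word N u \<and> valid_word N v"
  by (auto simp: valid_word_def)
lemma valid_word_Cons [simp]: "valid_word N (g # v) \<longleftrightarrow> valid_gen N g \<and> valid_word N v"
  by (auto simp: valid_word_def)
lemma valid_word_Nil [simp]: "valid_word N []" by (simp add: valid_word_def)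
lemma valid_word_gamma_word [simp]: "valid_word N (gamma_word k)" by (auto simp: valid_word_def gamma_word_def)

lemma Gh_Ghinv_rel: "fsub (fmul (gn Gh) (gn Ghinv)) fone \<in> rels N B"
  unfolding rels_def by blast
lemma Gh_commute_rel: "valid_gen N g \<Longrightarrow> comm (gn Gh) (gn g) \<in> rels N B"
  unfolding rels_def by (rule UnI1)+ blast
lemma Ghinv_Gh_rel: "fsub (fmul (gn Ghinv) (gn Gh)) fone \<in> rels N B"
  unfolding rels_def by blast

lemma rel_ideal_fsum: "finite A \<Longrightarrow> (\<And>a. a \<in> A \<Longrightarrow> f a \<in> rel_ideal N B) \<Longrightarrow> fsum f A \<in> rel_ideal N B"
proof (induction A rule: finite_induct)
  case empty
  have eq: "fsum f {} = fzero" by (rule ext) simp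
  show ?case unfolding eq by (rule rel_ideal.zero)
next
  case (insert x F)
  have eq: "fsum f (insert x F) = fadd (f x) (fsum f F)"
    using insert by (simp add: fsum_def fadd_def)
  have "fsum f F \<in> rel_ideal N B" using insert.IH insert.prems by blast
  then have "fadd (f x) (fsum f F) \<in> rel_ideal N B" using insert.prems by (intro rel_ideal.add) auto
  then show ?case by (simp only: eq)
qed

lemma rel_ideal_mon_left: "valid_word N u \<Longrightarrow> a \<in> rel_ideal N B \<Longrightarrow> fmul (mon u) a \<in> rel_ideal N B"
proof (induction u)
  case Nil then show ?case by (simp flip: fone_def)
next
  case (Cons g u)
  have eq: "fmul (mon (g # u)) a = fmul (gn g) (fmul (mon u) a)"
    using fmul_mon_mon_left[of "[g]" u a] by (simp add: gn_def)
  show ?case unfolding eq using Cons by (intro rel_ideal.lmul) auto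
qed

lemma rel_ideal_mon_right: "valid_word N u \<Longrightarrow> a \<in> rel_ideal N B \<Longrightarrow> fmul a (mon u) \<in> rel_ideal N B"
proof (induction u rule: rev_induct)
  case Nil then show ?case by (simp flip: fone_def)
next
  case (snoc g u)
  have eq: "fmul a (mon (u @ [g])) = fmul (fmul a (mon u)) (gn g)"
    using fmul_mon_mon_right[of a u "[g]"] by (simp add: gn_def)
  show ?case unfolding eq using snoc by (intro rel_ideal.rmul) auto
qed

lemma ueq_refl [simp]: "ueq N B a a"
proof -
  have eq: "fsub a a = fzero" by (rule ext) simp
  show ?thesis unfolding ueq_def eq by (rule rel_ideal.zero)
qed

lemma ueq_sym: "ueq N B a b \<Longrightarrow> ueq N B b a"
proof -
  assume h: "ueq N B a b"
  have eq: "fsub b a = fsmul (-1) (fsub a b)" by (rule ext) simp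
  show ?thesis using h unfolding ueq_def eq by (rule rel_ideal.smul)
qed

lemma ueq_trans: "ueq N B a b \<Longrightarrow> ueq N B b c \<Longrightarrow> ueq N B a c"
proof -
  assume h: "ueq N B a b" "ueq N B b c"
  have eq: "fsub a c = fadd (fsub a b) (fsub b c)" by (rule ext) simp
  show ?thesis using h unfolding ueq_def eq by (rule rel_ideal.add)
qed

lemma ueq_fsum: "finite A \<Longrightarrow> (\<And>x. x \<in> A \<Longrightarrow> ueq N B (f x) (g x)) \<Longrightarrow>
   ueq N B (fsum f A) (fsum g A)"
proof -
  assume h: "finite A" "\<And>x. x \<in> A \<Longrightarrow> ueq N B (f x) (g x)"
  have eq: "fsub (fsum f A) (fsum g A) = fsum (\<lambda>x. fsub (f x) (g x)) A"
    by (rule ext) (simp add: sum_subtractf)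
  show ?thesis unfolding ueq_def eq using h unfolding ueq_def by (intro rel_ideal_fsum) auto
qed

lemma ueq_fsmul: "ueq N B a b \<Longrightarrow> ueq N B (fsmul c a) (fsmul c b)"
proof -
  assume h: "ueq N B a b"
  have eq: "fsub (fsmul c a) (fsmul c b) = fsmul c (fsub a b)" by (rule ext) (simp add: algebra_simps)
  show ?thesis using h unfolding ueq_def eq by (rule rel_ideal.smul)
qed

definition word_eq :: "nat \<Rightarrow> (nat \<Rightarrow> nat \<Rightarrow> int) \<Rightarrow> gen list \<Rightarrow> gen list \<Rightarrow> bool" where
  "word_eq N B u v \<longleftrightarrow> ueq N B (mon u) (mon v)"

lemma word_eq_refl [simp]: "word_eq N B u u" by (simp add: word_eq_def)
lemma word_eq_sym: "word_eq N B u v \<Longrightarrow> word_eq N B v u" by (simp add: word_eq_def ueq_sym)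
lemma word_eq_trans: "word_eq N B u v \<Longrightarrow> word_eq N B v w \<Longrightarrow> word_eq N B u w"
  unfolding word_eq_def by (rule ueq_trans)

lemma word_eq_ctx:
  assumes "word_eq N B a b" "valid_word N p" "valid_word N s"
  shows "word_eq N B (p @ a @ s) (p @ b @ s)"
proof -
  have eq: "fsub (mon (p @ a @ s)) (mon (p @ b @ s)) = fmul (mon p) (fmul (fsub (mon a) (mon b)) (mon s))"
    by (simp add: fmul_fsub_left fmul_fsub_right mon_mul)
  have "fsub (mon a) (mon b) \<in> rel_ideal N B" using assms(1) by (simp add: word_eq_def ueq_def)
  then show ?thesis unfolding word_eq_def ueq_def eq using assms(2,3) by (intro rel_ideal_mon_left rel_ideal_mon_right)
qed

lemma word_eq_Gh_commute: "valid_gen N g \<Longrightarrow> word_eq N B [Gh, g] [g, Gh]"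
proof -
  assume g: "valid_gen N g"
  have "comm (gn Gh) (gn g) \<in> rels N B" using g by (rule Gh_commute_rel)
  then have "comm (gn Gh) (gn g) \<in> rel_ideal N B" by (rule rel_ideal.gen)
  moreover have "comm (gn Gh) (gn g) = fsub (mon [Gh, g]) (mon [g, Gh])"
    by (simp add: comm_def gn_def mon_mul)
  ultimately show ?thesis by (simp add: word_eq_def ueq_def)
qed

lemma word_eq_Gh_Ghinv: "word_eq N B [Gh, Ghinv] []"
proof -
  have "fsub (fmul (gn Gh) (gn Ghinv)) fone \<in> rel_ideal N B" by (rule rel_ideal.gen, rule Gh_Ghinv_rel)
  then show ?thesis by (simp add: word_eq_def ueq_def gn_def mon_mul fone_def)
qed

lemma word_eq_Ghinv_Gh: "word_eq N B [Ghinv, Gh] []"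
proof -
  have "fsub (fmul (gn Ghinv) (gn Gh)) fone \<in> rel_ideal N B" by (rule rel_ideal.gen, rule Ghinv_Gh_rel)
  then show ?thesis by (simp add: word_eq_def ueq_def gn_def mon_mul fone_def)
qed

lemma word_eq_Ghinv_commute: "valid_gen N g \<Longrightarrow> word_eq N B [g, Ghinv] [Ghinv, g]"
proof -
  assume g: "valid_gen N g"
  have 1: "word_eq N B ([] @ [] @ [g, Ghinv]) ([] @ [Ghinv, Gh] @ [g, Ghinv])"
    by (rule word_eq_ctx) (use g word_eq_Ghinv_Gh word_eq_sym in auto)
  have 2: "word_eq N B ([Ghinv] @ [Gh, g] @ [Ghinv]) ([Ghinv] @ [g, Gh] @ [Ghinv])"
    by (rule word_eq_ctx) (use g word_eq_Gh_commute in auto)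
  have 3: "word_eq N B ([Ghinv, g] @ [Gh, Ghinv] @ []) ([Ghinv, g] @ [] @ [])"
    by (rule word_eq_ctx) (use g word_eq_Gh_Ghinv in auto)
  from 1 2 3 show ?thesis by simp (meson word_eq_trans)
qed

lemma gamma_word_neg_step: "e < 0 \<Longrightarrow> gamma_word e = Ghinv # gamma_word (e + 1)"
proof -
  assume "e < 0"
  then have "nat (- e) = Suc (nat (- (e + 1)))" by simp
  then show ?thesis using \<open>e < 0\<close> by (simp add: gamma_word_def)
qed

lemma gamma_word_pos_step: "e > 0 \<Longrightarrow> gamma_word e = Gh # gamma_word (e - 1)"
proof -
  assume "e > 0"
  then have "nat e = Suc (nat (e - 1))" by simp
  then show ?thesis using \<open>e > 0\<close> by (simp add: gamma_word_def)
qed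

lemma word_eq_gamma_word_Gh: "word_eq N B (Gh # gamma_word e) (gamma_word (e + 1))"
proof (cases "e \<ge> 0")
  case True
  then have "gamma_word (e + 1) = Gh # gamma_word e" using gamma_word_pos_step[of "e+1"] by simp
  then show ?thesis by simp
next
  case False
  then have eq: "gamma_word e = Ghinv # gamma_word (e + 1)" by (simp add: gamma_word_neg_step)
  have "word_eq N B ([] @ [Gh, Ghinv] @ gamma_word (e + 1)) ([] @ [] @ gamma_word (e + 1))"
    by (rule word_eq_ctx) (use word_eq_Gh_Ghinv in auto)
  then show ?thesis by (simp add: eq)
qed

lemma word_eq_gamma_word_Ghinv: "word_eq N B (Ghinv # gamma_word e) (gamma_word (e - 1))"
proof (cases "e \<le> 0")
  case True
  then have "gamma_word (e - 1) = Ghinv # gamma_word e" using gamma_word_neg_step[of "e-1"] by simp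
  then show ?thesis by simp
next
  case False
  then have eq: "gamma_word e = Gh # gamma_word (e - 1)" by (simp add: gamma_word_pos_step)
  have "word_eq N B ([] @ [Ghinv, Gh] @ gamma_word (e - 1)) ([] @ [] @ gamma_word (e - 1))"
    by (rule word_eq_ctx) (use word_eq_Ghinv_Gh in auto)
  then show ?thesis by (simp add: eq)
qed

lemma word_eq_move_replicate:
  assumes g: "valid_gen N g" and h: "h = Gh \<or> h = Ghinv"
  shows "word_eq N B (g # replicate n h) (replicate n h @ [g])"
proof (induction n)
  case 0 then show ?case by simp
next
  case (Suc n)
  have v: "valid_gen N h" using h by auto
  have 1: "word_eq N B ([] @ [g, h] @ replicate n h) ([] @ [h, g] @ replicate n h)"
    by (rule word_eq_ctx) (use g h v word_eq_Gh_commute word_eq_Ghinv_commute word_eq_sym in \<open>auto simp: valid_word_def\<close>)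
  have 2: "word_eq N B ([h] @ (g # replicate n h) @ []) ([h] @ (replicate n h @ [g]) @ [])"
    by (rule word_eq_ctx) (use Suc v in auto)
  from 1 2 show ?case by (simp add: replicate_append_same) (meson word_eq_trans)
qed

lemma word_eq_move_gamma_word: "valid_gen N g \<Longrightarrow> word_eq N B (g # gamma_word e) (gamma_word e @ [g])"
  unfolding gamma_word_def by (auto intro: word_eq_move_replicate)

definition xm_word :: "(nat \<times> int) list \<Rightarrow> gen list" where
  "xm_word xs = map (\<lambda>(i, l). Xm i l) xs"

lemma gexp_append [simp]: "gexp (u @ v) = gexp u + gexp v"
  by (induction u rule: gexp.induct) auto
lemma xpart_append [simp]: "xpart (u @ v) = xpart u @ xpart v"
  by (induction u rule: xpart.induct) auto
lemma gexp_xm_word [simp]: "gexp (xm_word xs) = 0" by (induction xs) (auto simp: xm_word_def)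
lemma xpart_xm_word [simp]: "xpart (xm_word xs) = xs" by (induction xs) (auto simp: xm_word_def)
lemma gexp_gamma_word [simp]: "gexp (gamma_word e) = e"
proof -
  have a: "gexp (replicate n Gh) = int n" for n by (induction n) auto
  have b: "gexp (replicate n Ghinv) = - int n" for n by (induction n) auto
  show ?thesis by (simp add: gamma_word_def a b)
qed

lemma xpart_gamma_word [simp]: "xpart (gamma_word e) = []"
proof -
  have a: "xpart (replicate n g) = []" if "g = Gh \<or> g = Ghinv" for n g using that by (induction n) auto
  show ?thesis by (simp add: gamma_word_def a)
qed

lemma nword_xpart: "nword N w \<Longrightarrow> (i, l) \<in> set (xpart w) \<Longrightarrow> i \<in> {1..N}"
  by (induction w rule: xpart.induct) (auto simp: nword_def)

lemma valid_word_xm_word: "(\<forall>x\<in>set xs. fst x \<in> {1..N}) \<Longrightarrow> valid_word N (xm_word xs)"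
  by (auto simp: xm_word_def valid_word_def)

lemma word_eq_normal_form: "nword N w \<Longrightarrow> word_eq N B w (gamma_word (gexp w) @ xm_word (xpart w))"
proof (induction w)
  case Nil then show ?case by (simp add: gamma_word_def xm_word_def)
next
  case (Cons g w)
  have nw: "nword N w" using Cons.prems by (simp add: nword_def)
  have vw: "valid_word N (xm_word (xpart w))" using nword_xpart[OF nw] by (intro valid_word_xm_word) auto
  have 1: "word_eq N B ([g] @ w @ []) ([g] @ (gamma_word (gexp w) @ xm_word (xpart w)) @ [])"
    by (rule word_eq_ctx) (use Cons nw in \<open>auto simp: nword_def\<close>)
  have g: "g = Gh \<or> g = Ghinv \<or> (\<exists>i l. g = Xm i l \<and> i \<in> {1..N})" using Cons.prems by (simp add: nword_def)
  then show ?case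
  proof (elim disjE exE conjE)
    assume [simp]: "g = Gh"
    have 2: "word_eq N B ([] @ (Gh # gamma_word (gexp w)) @ xm_word (xpart w)) ([] @ gamma_word (gexp w + 1) @ xm_word (xpart w))"
      by (rule word_eq_ctx) (use vw word_eq_gamma_word_Gh in auto)
    from 1 2 show ?case by simp (meson word_eq_trans)
  next
    assume [simp]: "g = Ghinv"
    have 2: "word_eq N B ([] @ (Ghinv # gamma_word (gexp w)) @ xm_word (xpart w)) ([] @ gamma_word (gexp w - 1) @ xm_word (xpart w))"
      by (rule word_eq_ctx) (use vw word_eq_gamma_word_Ghinv in auto)
    from 1 2 show ?case by simp (meson word_eq_trans)
  next
    fix i l assume [simp]: "g = Xm i l" and i: "i \<in> {1..N}"
    have 2: "word_eq N B ([] @ (Xm i l # gamma_word (gexp w)) @ xm_word (xpart w)) ([] @ (gamma_word (gexp w) @ [Xm i l]) @ xm_word (xpart w))"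
      by (rule word_eq_ctx) (use vw i word_eq_move_gamma_word in auto)
    from 1 2 show ?case by (simp add: xm_word_def) (meson word_eq_trans)
  qed
qed


text \<open>The key \<open>(e, [(j1,n1), \<dots>])\<close> stands for the monomial \<open>\<gamma>^(e/2) x_{j1,n1} \<cdots>\<close>.\<close>

type_synonym key = "int \<times> (nat \<times> int) list"
type_synonym vec = "key \<Rightarrow>\<^sub>0 F"

definition coords :: "elt \<Rightarrow> vec" where
  "coords X = (\<Sum>w\<in>{w. X w \<noteq> 0}. single (gexp w, xpart w) (X w))"

lemma coords_superset:
  assumes "finite S" "{w. X w \<noteq> 0} \<subseteq> S"
  shows "coords X = (\<Sum>w\<in>S. single (gexp w, xpart w) (X w))"
  unfolding coords_def by (rule sum.mono_neutral_left) (use assms in auto)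

lemma coords_fadd: "finsupp X \<Longrightarrow> finsupp Y \<Longrightarrow> coords (fadd X Y) = coords X + coords Y"
proof -
  assume X: "finsupp X" and Y: "finsupp Y"
  let ?S = "{w. X w \<noteq> 0} \<union> {w. Y w \<noteq> 0}"
  have f: "finite ?S" using X Y by (simp add: finsupp_def)
  have "coords (fadd X Y) = (\<Sum>w\<in>?S. single (gexp w, xpart w) (fadd X Y w))"
    by (rule coords_superset) (use f in auto)
  also have "\<dots> = (\<Sum>w\<in>?S. single (gexp w, xpart w) (X w)) + (\<Sum>w\<in>?S. single (gexp w, xpart w) (Y w))"
    by (simp add: single_add sum.distrib)
  also have "\<dots> = coords X + coords Y"
    by (subst (1 2) coords_superset[symmetric]) (use f in auto)
  finally show ?thesis .
qed

lemma coords_fsmul: "finsupp X \<Longrightarrow> coords (fsmul c X) = vscale c (coords X)"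
proof -
  assume X: "finsupp X"
  have "coords (fsmul c X) = (\<Sum>w\<in>{w. X w \<noteq> 0}. single (gexp w, xpart w) (fsmul c X w))"
    by (rule coords_superset) (use X in \<open>auto simp: finsupp_def\<close>)
  also have "\<dots> = vscale c (coords X)" by (simp add: coords_def vscale_sum vscale_single)
  finally show ?thesis .
qed

lemma coords_fzero [simp]: "coords fzero = 0" by (simp add: coords_def fzero_def)

lemma coords_fsub: "finsupp X \<Longrightarrow> finsupp Y \<Longrightarrow> coords (fsub X Y) = coords X - coords Y"
proof -
  assume X: "finsupp X" and Y: "finsupp Y"
  have eq: "fsub X Y = fadd X (fsmul (-1) Y)" by (rule ext) simp
  have "vscale (-1) (coords Y) = - coords Y" by (rule poly_mapping_eqI) simp
  then show ?thesis unfolding eq using X Y by (simp add: coords_fadd finsupp_fsmul coords_fsmul)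
qed

lemma coords_fsum: "finite A \<Longrightarrow> (\<And>a. a \<in> A \<Longrightarrow> finsupp (f a)) \<Longrightarrow> coords (fsum f A) = (\<Sum>a\<in>A. coords (f a))"
proof (induction A rule: finite_induct)
  case empty
  have eq: "fsum f {} = fzero" by (rule ext) simp
  show ?case unfolding eq by (simp only: coords_fzero sum.empty)
next
  case (insert x F)
  have eq: "fsum f (insert x F) = fadd (f x) (fsum f F)"
    using insert by (simp add: fsum_def fadd_def)
  have ff: "finsupp (fsum f F)" using insert.prems by (intro finsupp_fsum) (auto simp: insert.hyps)
  have fx: "finsupp (f x)" using insert.prems by simp
  have IH: "coords (fsum f F) = (\<Sum>a\<in>F. coords (f a))" using insert.IH insert.prems by blast
  show ?case unfolding eq coords_fadd[OF fx ff] IH by (simp only: sum.insert[OF insert.hyps(1,2)])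
qed

lemma coords_mon: "coords (mon w) = single (gexp w, xpart w) 1"
proof -
  have "{v. mon w v \<noteq> 0} = {w}" by (auto simp: mon_def)
  then show ?thesis by (simp add: coords_def mon_def)
qed

definition lift_coords :: "gen list \<Rightarrow> vec \<Rightarrow> vec" where
  "lift_coords u = lin_ext (\<lambda>(e, xs). single (gexp u + e, xpart u @ xs) 1)"

lemma coords_fmul_mon: "finsupp Y \<Longrightarrow> coords (fmul (mon u) Y) = lift_coords u (coords Y)"
proof -
  assume Y: "finsupp Y"
  have "coords (fmul (mon u) Y) = coords (fsum (\<lambda>w. fsmul (Y w) (mon (u @ w))) {w. Y w \<noteq> 0})"
    by (simp add: fmul_mon_left_decomp[OF Y])
  also have "\<dots> = (\<Sum>w\<in>{w. Y w \<noteq> 0}. coords (fsmul (Y w) (mon (u @ w))))"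
    by (rule coords_fsum) (use Y in \<open>auto simp: finsupp_def[of Y] intro: finsupp_fsmul\<close>)
  also have "\<dots> = (\<Sum>w\<in>{w. Y w \<noteq> 0}. vscale (Y w) (single (gexp (u @ w), xpart (u @ w)) 1))"
    by (simp add: coords_fsmul coords_mon)
  also have "\<dots> = lift_coords u (coords Y)"
    by (simp add: lift_coords_def coords_def lin_ext_sum)
  finally show ?thesis .
qed

definition normal_mon :: "key \<Rightarrow> elt" where "normal_mon k = mon (gamma_word (fst k) @ xm_word (snd k))"

definition of_coords :: "vec \<Rightarrow> elt" where
  "of_coords v = fsum (\<lambda>k. fsmul (lookup v k) (normal_mon k)) (keys v)"

lemma of_coords_coords_eq:
  assumes X: "finsupp X"
  shows "of_coords (coords X) = fsum (\<lambda>w. fsmul (X w) (normal_mon (gexp w, xpart w))) {w. X w \<noteq> 0}"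
proof (rule ext)
  fix x
  let ?S = "{w. X w \<noteq> 0}"
  let ?k = "\<lambda>w. (gexp w, xpart w)"
  have fS: "finite ?S" using X by (simp add: finsupp_def)
  have lk: "lookup (coords X) k = (\<Sum>w\<in>{w \<in> ?S. ?k w = k}. X w)" for k
  proof -
    have "lookup (coords X) k = (\<Sum>w\<in>?S. if ?k w = k then X w else 0)"
      by (simp add: coords_def lookup_sum lookup_single when_def)
    also have "\<dots> = (\<Sum>w\<in>{w \<in> ?S. ?k w = k}. X w)"
      by (rule sum.inter_filter[OF fS, symmetric])
    finally show ?thesis .
  qed
  have ks: "keys (coords X) \<subseteq> ?k ` ?S"
  proof
    fix k assume "k \<in> keys (coords X)"
    then have "(\<Sum>w\<in>{w \<in> ?S. ?k w = k}. X w) \<noteq> 0" by (simp add: in_keys_iff lk)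
    then obtain w where "w \<in> ?S" "?k w = k"
      by (metis (mono_tags, lifting) empty_iff mem_Collect_eq sum.empty subsetI subset_antisym)
    then show "k \<in> ?k ` ?S" by auto
  qed
  have "of_coords (coords X) x = (\<Sum>k\<in>keys (coords X). lookup (coords X) k * normal_mon k x)" by (simp add: of_coords_def)
  also have "\<dots> = (\<Sum>k\<in>?k ` ?S. lookup (coords X) k * normal_mon k x)"
    by (rule sum.mono_neutral_left) (use ks fS in \<open>auto simp: in_keys_iff\<close>)
  also have "\<dots> = (\<Sum>k\<in>?k ` ?S. \<Sum>w\<in>{w \<in> ?S. ?k w = k}. X w * normal_mon (?k w) x)"
    by (rule sum.cong) (auto simp: lk sum_distrib_right)
  also have "\<dots> = (\<Sum>w\<in>?S. X w * normal_mon (?k w) x)"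
    by (rule sum.group) (use fS in auto)
  finally show "of_coords (coords X) x = fsum (\<lambda>w. fsmul (X w) (normal_mon (gexp w, xpart w))) ?S x" by simp
qed

lemma ueq_of_coords: "X \<in> nsub N \<Longrightarrow> ueq N B X (of_coords (coords X))"
proof -
  assume g: "X \<in> nsub N"
  then have X: "finsupp X" by (simp add: nsub_iff)
  have "ueq N B (fsum (\<lambda>w. fsmul (X w) (mon w)) {w. X w \<noteq> 0})
                 (fsum (\<lambda>w. fsmul (X w) (normal_mon (gexp w, xpart w))) {w. X w \<noteq> 0})"
  proof (rule ueq_fsum)
    show "finite {w. X w \<noteq> 0}" using X by (simp add: finsupp_def)
  next
    fix w assume "w \<in> {w. X w \<noteq> 0}"
    then have "nword N w" using g by (simp add: nsub_iff nword_supp_def)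
    then show "ueq N B (fsmul (X w) (mon w)) (fsmul (X w) (normal_mon (gexp w, xpart w)))"
      by (intro ueq_fsmul) (simp add: normal_mon_def word_eq_normal_form[unfolded word_eq_def])
  qed
  then show ?thesis by (simp add: of_coords_coords_eq[OF X] flip: elt_decomp[OF X])
qed

lemma ueq_coords: "X \<in> nsub N \<Longrightarrow> Y \<in> nsub N \<Longrightarrow> coords X = coords Y \<Longrightarrow> ueq N B X Y"
  by (metis ueq_of_coords ueq_sym ueq_trans)


lemma comps_fun_0: "comps_fun 0 s = (if s = 0 then {\<lambda>_. 0} else {})"
  by (auto simp: comps_fun_def)

lemma comps_fun_Suc:
  "comps_fun (Suc p) s = (\<lambda>(a0, a'). case_nat a0 a') ` (SIGMA a0:{..nat s}. comps_fun p (s - int a0))"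
proof (intro equalityI subsetI)
  fix a assume a: "a \<in> comps_fun (Suc p) s"
  then have z: "\<forall>m\<ge>Suc p. a m = 0" and sm: "int (\<Sum>m<Suc p. a m) = s" by (auto simp: comps_fun_def)
  have sm2: "(\<Sum>m<Suc p. a m) = a 0 + (\<Sum>m<p. a (Suc m))" by (rule sum.lessThan_Suc_shift)
  have n: "nat s = (\<Sum>m<Suc p. a m)" using sm by (metis nat_int)
  have "a 0 \<le> (\<Sum>m<Suc p. a m)" unfolding sm2 by simp
  then have "a 0 \<le> nat s" by (simp only: n)
  moreover have "(\<lambda>t. a (Suc t)) \<in> comps_fun p (s - int (a 0))"
  proof -
    have "s = int (a 0) + int (\<Sum>m<p. a (Suc m))" using sm sm2 by (metis of_nat_add)
    then have e: "int (\<Sum>m<p. a (Suc m)) = s - int (a 0)" by linarith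
    show ?thesis using z e by (auto simp: comps_fun_def simp del: of_nat_sum)
  qed
  moreover have "a = case_nat (a 0) (\<lambda>t. a (Suc t))"
    by (rule ext) (simp split: nat.split)
  ultimately show "a \<in> (\<lambda>(a0, a'). case_nat a0 a') ` (SIGMA a0:{..nat s}. comps_fun p (s - int a0))"
    by (auto intro!: image_eqI[where x = "(a 0, \<lambda>t. a (Suc t))"])
next
  fix a assume "a \<in> (\<lambda>(a0, a'). case_nat a0 a') ` (SIGMA a0:{..nat s}. comps_fun p (s - int a0))"
  then obtain a0 a' where a: "a = case_nat a0 a'" and a0: "a0 \<le> nat s" and a': "a' \<in> comps_fun p (s - int a0)"
    by auto
  have "(\<Sum>m<Suc p. a m) = a 0 + (\<Sum>m<p. a (Suc m))" by (rule sum.lessThan_Suc_shift)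
  then have "(\<Sum>m<Suc p. a m) = a0 + (\<Sum>m<p. a' m)" by (simp add: a)
  moreover have "int (\<Sum>m<p. a' m) = s - int a0" using a' by (simp add: comps_fun_def del: of_nat_sum)
  ultimately have sm: "int (\<Sum>m<Suc p. a m) = s" by simp
  have z: "\<forall>m\<ge>Suc p. a m = 0"
  proof (intro allI impI)
    fix m assume "Suc p \<le> m"
    then obtain m' where "m = Suc m'" "p \<le> m'" by (cases m) auto
    then show "a m = 0" using a' by (simp add: a comps_fun_def)
  qed
  show "a \<in> comps_fun (Suc p) s" using sm z unfolding comps_fun_def by blast
qed

lemma inj_case_nat: "inj_on (\<lambda>(a0::nat, a'::nat\<Rightarrow>nat). case_nat a0 a') A"
proof (rule inj_on_inverseI[where g = "\<lambda>f. (f 0, \<lambda>t. f (Suc t))"])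
  fix x :: "nat \<times> (nat \<Rightarrow> nat)" assume "x \<in> A"
  show "(\<lambda>f. (f 0, \<lambda>t. f (Suc t))) ((\<lambda>(a0, a'). case_nat a0 a') x) = x" by (cases x) simp
qed

lemma finite_comps_fun [simp]: "finite (comps_fun p s)"
proof (induction p arbitrary: s)
  case 0 then show ?case by (simp add: comps_fun_0)
next
  case (Suc p) then show ?case by (simp add: comps_fun_Suc)
qed

lemma sum_comps_fun_Suc:
  "(\<Sum>a\<in>comps_fun (Suc p) s. f a) = (\<Sum>a0\<le>nat s. \<Sum>a'\<in>comps_fun p (s - int a0). f (case_nat a0 a'))"
proof -
  have "(\<Sum>a\<in>comps_fun (Suc p) s. f a) = (\<Sum>x\<in>(SIGMA a0:{..nat s}. comps_fun p (s - int a0)). f (case_prod case_nat x))"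
    unfolding comps_fun_Suc by (subst sum.reindex[OF inj_case_nat]) (simp add: comp_def case_prod_beta)
  also have "\<dots> = (\<Sum>a0\<le>nat s. \<Sum>a'\<in>comps_fun p (s - int a0). f (case_nat a0 a'))"
    by (subst sum.Sigma) (auto simp: case_prod_beta)
  finally show ?thesis .
qed

lemma comps_fun_neg: "s < 0 \<Longrightarrow> comps_fun p s = {}"
  by (auto simp: comps_fun_def simp del: of_nat_sum)


definition rest_shifted :: "int \<Rightarrow> (nat \<times> int) list \<Rightarrow> nat \<Rightarrow> (nat \<Rightarrow> nat) \<Rightarrow> (nat \<times> int) list" where
  "rest_shifted \<sigma> xs p a = map (\<lambda>m. (fst (xs ! m), snd (xs ! m) + \<sigma> * int (a m))) (filter (\<lambda>m. m \<noteq> p) [0..<length xs])"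

definition coef_prod :: "int \<Rightarrow> (nat \<Rightarrow> nat \<Rightarrow> int) \<Rightarrow> nat \<Rightarrow> (nat \<times> int) list \<Rightarrow> nat \<Rightarrow> (nat \<Rightarrow> nat) \<Rightarrow> F" where
  "coef_prod \<sigma> B i xs p a = (\<Prod>m<p. gcoef (qpow (- \<sigma> * B i (fst (xs ! m)))) (a m))"

definition Om_mon :: "int \<Rightarrow> (nat \<Rightarrow> nat \<Rightarrow> int) \<Rightarrow> nat \<Rightarrow> int \<Rightarrow> (nat \<times> int) list \<Rightarrow> elt" where
  "Om_mon \<sigma> B i r xs = fsum (\<lambda>p. if fst (xs ! p) = i then
        fmul (gpow (2 * \<sigma> * r))
          (fsum (\<lambda>a. fsmul (coef_prod \<sigma> B i xs p a) (xmon (rest_shifted \<sigma> xs p a)))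
                (comps_fun p (\<sigma> * (snd (xs ! p) + r))))
      else fzero) {..<length xs}"

lemma om_psi_mon_Om_mon: "om_psi_mon B i r xs = Om_mon 1 B i r xs"
  unfolding om_psi_mon_def Om_mon_def coef_prod_def rest_shifted_def by (simp only: mult_1 mult_1_right mult_minus1)

lemma om_phi_mon_Om_mon: "om_phi_mon B i r xs = Om_mon (-1) B i r xs"
proof -
  have a: "- 2 * r = 2 * (- 1) * r" by simp
  have b: "- snd (xs ! p) - r = (- 1) * (snd (xs ! p) + r)" for p by simp
  have c: "qpow (B i j) = qpow (- (- 1) * B i j)" for j by simp
  have d: "snd (xs ! m) - int (a m) = snd (xs ! m) + (- 1) * int (a m)" for m a by simp
  show ?thesis unfolding om_phi_mon_def Om_mon_def coef_prod_def rest_shifted_def a b c d ..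
qed

definition Om :: "int \<Rightarrow> (nat \<Rightarrow> nat \<Rightarrow> int) \<Rightarrow> nat \<Rightarrow> int \<Rightarrow> elt \<Rightarrow> elt" where
  "Om \<sigma> B i r = linext (\<lambda>w. fmul (gpow (gexp w)) (Om_mon \<sigma> B i r (xpart w)))"

lemma OmPsi_Om: "OmPsi B i r X = Om 1 B i r X"
  by (simp add: OmPsi_def Om_def om_psi_mon_Om_mon)

lemma OmPhi_Om: "OmPhi B i r X = Om (-1) B i r X"
  by (simp add: OmPhi_def Om_def om_phi_mon_Om_mon)

text \<open>Coordinates of \<open>\<Omega>(r)\<close> applied to the monomial with key \<open>k\<close>: the letter at position \<open>p\<close>
  is removed, and the letters before it absorb the Taylor expansion of the product of the \<open>g\<close>-factors,
  one exponent \<open>a m\<close> per letter.\<close>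

definition Om_key :: "int \<Rightarrow> (nat \<Rightarrow> nat \<Rightarrow> int) \<Rightarrow> nat \<Rightarrow> int \<Rightarrow> key \<Rightarrow> vec" where
  "Om_key \<sigma> B i r k = (\<Sum>p<length (snd k). if fst (snd k ! p) = i then
      (\<Sum>a\<in>comps_fun p (\<sigma> * (snd (snd k ! p) + r)).
          single (fst k + 2 * \<sigma> * r, rest_shifted \<sigma> (snd k) p a) (coef_prod \<sigma> B i (snd k) p a))
     else 0)"

definition Om_vec :: "int \<Rightarrow> (nat \<Rightarrow> nat \<Rightarrow> int) \<Rightarrow> nat \<Rightarrow> int \<Rightarrow> vec \<Rightarrow> vec" where
  "Om_vec \<sigma> B i r = lin_ext (Om_key \<sigma> B i r)"

lemma xmon_xm_word: "xmon xs = mon (xm_word xs)" by (simp add: xmon_def xm_word_def)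

lemma lift_coords_single: "lift_coords u (single (e, xs) c) = single (gexp u + e, xpart u @ xs) c"
  by (simp add: lift_coords_def vscale_single)

lemma lift_coords_zero [simp]: "lift_coords u 0 = 0"
  by (simp add: lift_coords_def)

lemma lift_coords_sum: "lift_coords u (sum f A) = (\<Sum>a\<in>A. lift_coords u (f a))"
  by (simp add: lift_coords_def lin_ext_sum)

lemma finsupp_Om_mon: "finsupp (Om_mon \<sigma> B i r xs)"
  unfolding Om_mon_def
  by (intro finsupp_fsum) (auto intro!: finsupp_fmul finsupp_fsum finsupp_fsmul simp: xmon_xm_word)

lemma nword_supp_Om_mon: "(\<forall>x\<in>set xs. fst x \<in> {1..N}) \<Longrightarrow> nword_supp N (Om_mon \<sigma> B i r xs)"
  unfolding Om_mon_def
proof (intro nword_supp_fsum)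
  assume h: "\<forall>x\<in>set xs. fst x \<in> {1..N}"
  fix p
  have "nword N (xm_word (rest_shifted \<sigma> xs p a))" for a
    using h by (auto simp: nword_def xm_word_def rest_shifted_def)
  then show "nword_supp N (if fst (xs ! p) = i then fmul (gpow (2 * \<sigma> * r))
          (fsum (\<lambda>a. fsmul (coef_prod \<sigma> B i xs p a) (xmon (rest_shifted \<sigma> xs p a)))
                (comps_fun p (\<sigma> * (snd (xs ! p) + r)))) else fzero)"
    by (auto intro!: nword_supp_fmul nword_supp_fsum nword_supp_fsmul simp: xmon_xm_word)
qed

lemma coords_Om_mon: "coords (Om_mon \<sigma> B i r xs) = Om_key \<sigma> B i r (0, xs)"
proof -
  have inner: "coords (fmul (gpow (2 * \<sigma> * r))
          (fsum (\<lambda>a. fsmul (coef_prod \<sigma> B i xs p a) (xmon (rest_shifted \<sigma> xs p a)))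
                (comps_fun p (\<sigma> * (snd (xs ! p) + r)))))
     = (\<Sum>a\<in>comps_fun p (\<sigma> * (snd (xs ! p) + r)).
          single (2 * \<sigma> * r, rest_shifted \<sigma> xs p a) (coef_prod \<sigma> B i xs p a))" for p
  proof -
    let ?Y = "fsum (\<lambda>a. fsmul (coef_prod \<sigma> B i xs p a) (xmon (rest_shifted \<sigma> xs p a))) (comps_fun p (\<sigma> * (snd (xs ! p) + r)))"
    have fY: "finsupp ?Y" by (intro finsupp_fsum) (auto intro!: finsupp_fsmul simp: xmon_xm_word)
    have "coords ?Y = (\<Sum>a\<in>comps_fun p (\<sigma> * (snd (xs ! p) + r)). coords (fsmul (coef_prod \<sigma> B i xs p a) (xmon (rest_shifted \<sigma> xs p a))))"
      by (rule coords_fsum) (auto intro!: finsupp_fsmul simp: xmon_xm_word)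
    also have "\<dots> = (\<Sum>a\<in>comps_fun p (\<sigma> * (snd (xs ! p) + r)). single (0, rest_shifted \<sigma> xs p a) (coef_prod \<sigma> B i xs p a))"
      by (simp add: coords_fsmul xmon_xm_word coords_mon vscale_single)
    finally show ?thesis unfolding gpow_mon coords_fmul_mon[OF fY] by (simp add: lift_coords_sum lift_coords_single)
  qed
  have "coords (Om_mon \<sigma> B i r xs) = (\<Sum>p<length xs. coords (if fst (xs ! p) = i then
        fmul (gpow (2 * \<sigma> * r))
          (fsum (\<lambda>a. fsmul (coef_prod \<sigma> B i xs p a) (xmon (rest_shifted \<sigma> xs p a)))
                (comps_fun p (\<sigma> * (snd (xs ! p) + r))))
      else fzero))"
    unfolding Om_mon_def
    by (rule coords_fsum) (auto intro!: finsupp_fmul finsupp_fsum finsupp_fsmul simp: xmon_xm_word)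
  also have "\<dots> = Om_key \<sigma> B i r (0, xs)"
    unfolding Om_key_def by (rule sum.cong) (auto simp: inner)
  finally show ?thesis .
qed

lemma lift_coords_Om_key: "lift_coords (gamma_word e) (Om_key \<sigma> B i r (0, xs)) = Om_key \<sigma> B i r (e, xs)"
  unfolding Om_key_def by (simp add: lift_coords_sum lift_coords_single if_distrib cong: if_cong)

lemma coords_Om:
  assumes X: "finsupp X"
  shows "coords (Om \<sigma> B i r X) = Om_vec \<sigma> B i r (coords X)"
proof -
  let ?S = "{w. X w \<noteq> 0}"
  have fS: "finite ?S" using X by (simp add: finsupp_def)
  have f1: "finsupp (fmul (gpow (gexp w)) (Om_mon \<sigma> B i r (xpart w)))" for w
    by (intro finsupp_fmul finsupp_gpow finsupp_Om_mon)
  have "coords (Om \<sigma> B i r X) = (\<Sum>w\<in>?S. coords (fsmul (X w) (fmul (gpow (gexp w)) (Om_mon \<sigma> B i r (xpart w)))))"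
    unfolding Om_def linext_def by (rule coords_fsum[OF fS]) (intro finsupp_fsmul f1)
  also have "\<dots> = (\<Sum>w\<in>?S. vscale (X w) (Om_key \<sigma> B i r (gexp w, xpart w)))"
    by (rule sum.cong[OF refl])
       (subst coords_fsmul[OF f1], simp only: gpow_mon coords_fmul_mon[OF finsupp_Om_mon] coords_Om_mon lift_coords_Om_key)
  also have "\<dots> = Om_vec \<sigma> B i r (coords X)"
    by (simp add: Om_vec_def coords_def lin_ext_sum)
  finally show ?thesis .
qed

lemma finsupp_Om:
  assumes X: "finsupp X" shows "finsupp (Om \<sigma> B i r X)"
  unfolding Om_def linext_def
  by (rule finsupp_fsum) (insert X, auto simp: finsupp_def[of X] intro!: finsupp_fsmul finsupp_fmul finsupp_Om_mon)

lemma nsub_Om: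
  assumes X: "X \<in> nsub N"
  shows "Om \<sigma> B i r X \<in> nsub N"
  unfolding Om_def linext_def
proof (rule nsub_fsum)
  show "finite {w. X w \<noteq> 0}" using X by (simp add: nsub_iff finsupp_def)
next
  fix w assume "w \<in> {w. X w \<noteq> 0}"
  then have "nword N w" using X by (simp add: nsub_iff nword_supp_def)
  then have "\<forall>x\<in>set (xpart w). fst x \<in> {1..N}" using nword_xpart by force
  then show "fsmul (X w) (fmul (gpow (gexp w)) (Om_mon \<sigma> B i r (xpart w))) \<in> nsub N"
    by (intro nsub_fsmul nsub_fmul nsub_gpow) (simp add: nsub_iff finsupp_Om_mon nword_supp_Om_mon)
qed


section \<open>Peeling off the first letter\<close>

definition xm_vec :: "nat \<Rightarrow> int \<Rightarrow> int \<Rightarrow> vec \<Rightarrow> vec" where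
  "xm_vec i n d = lin_ext (\<lambda>k. single (fst k + d, (i, n) # snd k) 1)"
definition gshift :: "int \<Rightarrow> vec \<Rightarrow> vec" where
  "gshift d = lin_ext (\<lambda>k. single (fst k + d, snd k) 1)"

lemma xm_vec_single [simp]: "xm_vec i n d (single (e, xs) c) = single (e + d, (i, n) # xs) c"
  by (simp add: xm_vec_def vscale_single)
lemma gshift_single [simp]: "gshift d (single (e, xs) c) = single (e + d, xs) c"
  by (simp add: gshift_def vscale_single)

lemma rest_shifted_Suc:
  "rest_shifted \<sigma> ((i, n) # ys) (Suc p) (case_nat a0 a') = (i, n + \<sigma> * int a0) # rest_shifted \<sigma> ys p a'"
proof -
  have u: "[0..<Suc (length ys)] = 0 # map Suc [0..<length ys]"
    by (simp add: upt_conv_Cons map_Suc_upt del: upt_Suc)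
  have f: "filter (\<lambda>m. m \<noteq> Suc p) (map Suc [0..<length ys]) = map Suc (filter (\<lambda>m. m \<noteq> p) [0..<length ys])"
    by (simp add: filter_map comp_def)
  show ?thesis unfolding rest_shifted_def length_Cons u by (simp add: f comp_def del: upt_Suc)
qed

lemma rest_shifted_0: "rest_shifted \<sigma> ((i, n) # ys) 0 (\<lambda>_. 0) = ys"
proof -
  have u: "[0..<Suc (length ys)] = 0 # map Suc [0..<length ys]"
    by (simp add: upt_conv_Cons map_Suc_upt del: upt_Suc)
  have f: "filter (\<lambda>m. m \<noteq> 0) (map Suc [0..<length ys]) = map Suc [0..<length ys]"
    by (simp add: filter_map comp_def)
  show ?thesis unfolding rest_shifted_def length_Cons u by (simp add: f comp_def map_nth del: upt_Suc)
qed

lemma coef_prod_Suc: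
  "coef_prod \<sigma> B m ((i, n) # ys) (Suc p) (case_nat a0 a') = gcoef (qpow (- \<sigma> * B m i)) a0 * coef_prod \<sigma> B m ys p a'"
  unfolding coef_prod_def prod.lessThan_Suc_shift by simp

lemma coef_prod_0: "coef_prod \<sigma> B m xs 0 a = 1" by (simp add: coef_prod_def)

lemma sum_lessThan_eq_atMost:
  assumes "nat s < M" "\<And>a. a > nat s \<Longrightarrow> g a = 0"
  shows "(\<Sum>a<M. g a) = (\<Sum>a\<le>nat s. g a)"
  by (rule sum.mono_neutral_right) (use assms in auto)

lemma Om_key_rec:
  assumes sign: "\<sigma> = 1 \<or> \<sigma> = -1"
    and M: "\<forall>p<length ys. nat (\<sigma> * (snd (ys ! p) + r)) < M"
  shows "Om_key \<sigma> B m r (e, (i, n) # ys) =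
     (if i = m \<and> r = - n then single (e + 2 * \<sigma> * r, ys) 1 else 0)
     + (\<Sum>a<M. vscale (gcoef (qpow (- \<sigma> * B m i)) a) (xm_vec i (n + \<sigma> * int a) (2 * int a) (Om_key \<sigma> B m (r - \<sigma> * int a) (e, ys))))"
proof -
  have ss: "\<sigma> * \<sigma> = 1" using sign by auto
  let ?c = "\<lambda>a. gcoef (qpow (- \<sigma> * B m i)) a"
  let ?T = "\<lambda>p. if fst (((i, n) # ys) ! p) = m then
      (\<Sum>a\<in>comps_fun p (\<sigma> * (snd (((i, n) # ys) ! p) + r)).
          single (e + 2 * \<sigma> * r, rest_shifted \<sigma> ((i, n) # ys) p a) (coef_prod \<sigma> B m ((i, n) # ys) p a))
     else 0"
  let ?U = "\<lambda>p a. if fst (ys ! p) = m then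
      (\<Sum>a'\<in>comps_fun p (\<sigma> * (snd (ys ! p) + r) - int a).
          single (e + 2 * \<sigma> * r, (i, n + \<sigma> * int a) # rest_shifted \<sigma> ys p a') (?c a * coef_prod \<sigma> B m ys p a'))
     else 0"
  have T0: "?T 0 = (if i = m \<and> r = - n then single (e + 2 * \<sigma> * r, ys) 1 else 0)"
  proof -
    have "\<sigma> * (n + r) = 0 \<longleftrightarrow> r = - n" using sign by auto
    then show ?thesis by (auto simp: comps_fun_0 rest_shifted_0 coef_prod_0)
  qed
  have TS: "?T (Suc p) = (\<Sum>a\<le>nat (\<sigma> * (snd (ys ! p) + r)). ?U p a)" for p
    by (simp add: sum_comps_fun_Suc rest_shifted_Suc coef_prod_Suc)
  have lhs: "Om_key \<sigma> B m r (e, (i, n) # ys) = ?T 0 + (\<Sum>p<length ys. ?T (Suc p))"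
    unfolding Om_key_def by (simp only: fst_conv snd_conv length_Cons sum.lessThan_Suc_shift)
  have inner: "vscale (?c a) (xm_vec i (n + \<sigma> * int a) (2 * int a) (Om_key \<sigma> B m (r - \<sigma> * int a) (e, ys)))
      = (\<Sum>p<length ys. ?U p a)" for a
  proof -
    have e1: "\<sigma> * (snd (ys ! p) + (r - \<sigma> * int a)) = \<sigma> * (snd (ys ! p) + r) - int a" for p
      using ss by (simp add: algebra_simps)
    have e2: "e + 2 * \<sigma> * (r - \<sigma> * int a) + 2 * int a = e + 2 * \<sigma> * r"
      using ss by (simp add: algebra_simps)
    show ?thesis
      unfolding Om_key_def xm_vec_def
      by (simp add: lin_ext_sum if_distrib vscale_sum vscale_single e1 e2 cong: if_cong)
  qed
  have "(\<Sum>a<M. vscale (?c a) (xm_vec i (n + \<sigma> * int a) (2 * int a) (Om_key \<sigma> B m (r - \<sigma> * int a) (e, ys))))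
      = (\<Sum>a<M. \<Sum>p<length ys. ?U p a)" by (simp only: inner)
  also have "\<dots> = (\<Sum>p<length ys. \<Sum>a<M. ?U p a)" by (rule sum.swap)
  also have "\<dots> = (\<Sum>p<length ys. ?T (Suc p))"
  proof (rule sum.cong[OF refl])
    fix p assume p: "p \<in> {..<length ys}"
    have "(\<Sum>a<M. ?U p a) = (\<Sum>a\<le>nat (\<sigma> * (snd (ys ! p) + r)). ?U p a)"
    proof (rule sum_lessThan_eq_atMost)
      show "nat (\<sigma> * (snd (ys ! p) + r)) < M" using M p by auto
    next
      fix a assume "nat (\<sigma> * (snd (ys ! p) + r)) < a"
      then have "\<sigma> * (snd (ys ! p) + r) - int a < 0" by linarith
      then show "?U p a = 0" by (simp add: comps_fun_neg)
    qed
    then show "(\<Sum>a<M. ?U p a) = ?T (Suc p)" by (simp only: TS)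
  qed
  finally show ?thesis unfolding lhs T0 by simp
qed


lemma xm_vec_diff: "xm_vec i n d (v - w) = xm_vec i n d v - xm_vec i n d w" by (simp add: xm_vec_def lin_ext_diff)
lemma xm_vec_vscale: "xm_vec i n d (vscale c v) = vscale c (xm_vec i n d v)" by (simp add: xm_vec_def lin_ext_vscale)
lemma gshift_add: "gshift d (v + w) = gshift d v + gshift d w" by (simp add: gshift_def lin_ext_add)
lemma gshift_diff: "gshift d (v - w) = gshift d v - gshift d w" by (simp add: gshift_def lin_ext_diff)
lemma gshift_vscale: "gshift d (vscale c v) = vscale c (gshift d v)" by (simp add: gshift_def lin_ext_vscale)
lemma gshift_sum: "gshift d (sum f A) = (\<Sum>a\<in>A. gshift d (f a))" by (simp add: gshift_def lin_ext_sum)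
lemma gshift_zero [simp]: "gshift d 0 = 0" by (simp add: gshift_def)
lemma Om_vec_add: "Om_vec \<sigma> B i r (v + w) = Om_vec \<sigma> B i r v + Om_vec \<sigma> B i r w" by (simp add: Om_vec_def lin_ext_add)
lemma Om_vec_vscale: "Om_vec \<sigma> B i r (vscale c v) = vscale c (Om_vec \<sigma> B i r v)" by (simp add: Om_vec_def lin_ext_vscale)
lemma Om_vec_sum: "Om_vec \<sigma> B i r (sum f A) = (\<Sum>a\<in>A. Om_vec \<sigma> B i r (f a))" by (simp add: Om_vec_def lin_ext_sum)
lemma Om_vec_zero [simp]: "Om_vec \<sigma> B i r 0 = 0" by (simp add: Om_vec_def)

lemma gshift_0 [simp]: "gshift 0 v = v"
proof -
  have "gshift 0 v = lin_ext (\<lambda>k. single k 1) v" unfolding gshift_def by (rule lin_ext_cong) simp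
  then show ?thesis by (simp add: lin_ext_basis)
qed

lemma gshift_gshift: "gshift d (gshift d' v) = gshift (d + d') v"
  unfolding gshift_def by (simp add: lin_ext_lin_ext vscale_single algebra_simps)

lemma xm_vec_gshift: "xm_vec i n x (gshift d v) = xm_vec i n (d + x) v"
  unfolding gshift_def xm_vec_def by (simp add: lin_ext_lin_ext vscale_single add.assoc)

lemma gshift_xm_vec: "gshift d (xm_vec i n x v) = xm_vec i n (x + d) v"
  unfolding gshift_def xm_vec_def by (simp add: lin_ext_lin_ext vscale_single add.assoc)

lemma Om_key_shift: "Om_key \<sigma> B i r (e + d, xs) = gshift d (Om_key \<sigma> B i r (e, xs))"
  unfolding Om_key_def by (simp add: gshift_sum gshift_single if_distrib algebra_simps cong: if_cong)

lemma Om_vec_gshift: "Om_vec \<sigma> B i r (gshift d v) = gshift d (Om_vec \<sigma> B i r v)"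
proof -
  have "Om_vec \<sigma> B i r (gshift d v) = lin_ext (\<lambda>k. Om_key \<sigma> B i r (fst k + d, snd k)) v"
    unfolding Om_vec_def gshift_def by (simp add: lin_ext_lin_ext)
  also have "\<dots> = lin_ext (\<lambda>k. gshift d (Om_key \<sigma> B i r k)) v"
    by (rule lin_ext_cong) (simp add: Om_key_shift)
  also have "\<dots> = gshift d (Om_vec \<sigma> B i r v)"
    unfolding Om_vec_def by (simp add: gshift_def lin_ext_lin_ext)
  finally show ?thesis .
qed

definition mode_bound :: "vec \<Rightarrow> int" where
  "mode_bound v = (\<Sum>k\<in>keys v. \<Sum>x\<leftarrow>snd k. \<bar>snd x\<bar>)"

lemma mode_bound_ge: "k \<in> keys v \<Longrightarrow> x \<in> set (snd k) \<Longrightarrow> \<bar>snd x\<bar> \<le> mode_bound v"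
proof -
  assume k: "k \<in> keys v" and x: "x \<in> set (snd k)"
  have "\<bar>snd x\<bar> \<le> (\<Sum>x\<leftarrow>snd k. \<bar>snd x\<bar>)"
    using x by (intro Groups_List.member_le_sum_list) auto
  also have "\<dots> \<le> mode_bound v" unfolding mode_bound_def
    by (rule member_le_sum) (use k in \<open>auto intro!: sum_list_nonneg\<close>)
  finally show ?thesis .
qed

lemma mode_bound_zero [simp]: "mode_bound 0 = 0"
  by (simp add: mode_bound_def)

lemma Om_key_vanish:
  assumes "\<forall>p<length (snd k). \<sigma> * (snd (snd k ! p) + s) < 0"
  shows "Om_key \<sigma> B i s k = 0"
  unfolding Om_key_def by (rule sum.neutral) (use assms in \<open>auto simp: comps_fun_neg\<close>)

lemma Om_vec_vanish:
  assumes sign: "\<sigma> = 1 \<or> \<sigma> = -1" and s: "\<sigma> * s < - mode_bound v"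
  shows "Om_vec \<sigma> B i s v = 0"
proof -
  have "Om_vec \<sigma> B i s v = lin_ext (\<lambda>k. 0) v"
    unfolding Om_vec_def
  proof (rule lin_ext_cong, rule Om_key_vanish, intro allI impI)
    fix k p assume k: "k \<in> keys v" and p: "p < length (snd k)"
    have "\<bar>snd (snd k ! p)\<bar> \<le> mode_bound v" using mode_bound_ge[OF k] p by simp
    then show "\<sigma> * (snd (snd k ! p) + s) < 0" using sign s by (auto simp: algebra_simps)
  qed
  then show ?thesis by (simp add: lin_ext_def)
qed

lemma lin_ext_plus: "lin_ext (\<lambda>k. f k + g k) v = lin_ext f v + lin_ext g v"
  by (simp add: lin_ext_def vscale_add sum.distrib)

lemma lin_ext_if_const: "lin_ext (\<lambda>k. if P then f k else 0) v = (if P then lin_ext f v else 0)"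
  by (simp add: lin_ext_def)

lemma lin_ext_sum_vscale: "lin_ext (\<lambda>k. \<Sum>a\<in>A. vscale (c a) (g a k)) v = (\<Sum>a\<in>A. vscale (c a) (lin_ext (g a) v))"
proof -
  have "lin_ext (\<lambda>k. \<Sum>a\<in>A. vscale (c a) (g a k)) v = (\<Sum>k\<in>keys v. \<Sum>a\<in>A. vscale (lookup v k * c a) (g a k))"
    by (simp add: lin_ext_def vscale_sum)
  also have "\<dots> = (\<Sum>a\<in>A. \<Sum>k\<in>keys v. vscale (c a * lookup v k) (g a k))"
    by (subst sum.swap) (simp add: mult.commute)
  also have "\<dots> = (\<Sum>a\<in>A. vscale (c a) (lin_ext (g a) v))"
    by (simp add: lin_ext_def vscale_sum)
  finally show ?thesis .
qed

lemma gshift_as_lin_ext: "gshift d v = lin_ext (\<lambda>k. gshift d (single k 1)) v"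
  unfolding gshift_def by (rule lin_ext_cong) (simp add: vscale_single)

lemma xm_vec_Om_vec_lin_ext: "xm_vec i n d (Om_vec \<sigma> B m r v) = lin_ext (\<lambda>k. xm_vec i n d (Om_key \<sigma> B m r k)) v"
  unfolding Om_vec_def xm_vec_def by (rule lin_ext_lin_ext)

lemma Om_vec_rec:
  assumes sign: "\<sigma> = 1 \<or> \<sigma> = -1" and M: "nat (mode_bound v + \<sigma> * r) < M"
  shows "Om_vec \<sigma> B m r (xm_vec i n d v) =
     (if i = m \<and> r = - n then gshift (d + 2 * \<sigma> * r) v else 0)
     + (\<Sum>a<M. vscale (gcoef (qpow (- \<sigma> * B m i)) a) (xm_vec i (n + \<sigma> * int a) (d + 2 * int a) (Om_vec \<sigma> B m (r - \<sigma> * int a) v)))"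
proof -
  let ?c = "\<lambda>a. gcoef (qpow (- \<sigma> * B m i)) a"
  have "Om_vec \<sigma> B m r (xm_vec i n d v) = lin_ext (\<lambda>k. Om_key \<sigma> B m r (fst k + d, (i, n) # snd k)) v"
    unfolding Om_vec_def xm_vec_def by (simp add: lin_ext_lin_ext)
  also have "\<dots> = lin_ext (\<lambda>k. (if i = m \<and> r = - n then gshift (d + 2 * \<sigma> * r) (single k 1) else 0)
     + (\<Sum>a<M. vscale (?c a) (xm_vec i (n + \<sigma> * int a) (d + 2 * int a) (Om_key \<sigma> B m (r - \<sigma> * int a) k)))) v"
  proof (rule lin_ext_cong)
    fix k assume k: "k \<in> keys v"
    have Mk: "\<forall>p<length (snd k). nat (\<sigma> * (snd (snd k ! p) + r)) < M"
    proof (intro allI impI)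
      fix p assume p: "p < length (snd k)"
      have "\<bar>snd (snd k ! p)\<bar> \<le> mode_bound v" using mode_bound_ge[OF k] p by simp
      then have "\<sigma> * (snd (snd k ! p) + r) \<le> mode_bound v + \<sigma> * r" using sign by (auto simp: algebra_simps)
      then show "nat (\<sigma> * (snd (snd k ! p) + r)) < M" using M by linarith
    qed
    have "Om_key \<sigma> B m r (fst k + d, (i, n) # snd k) =
     (if i = m \<and> r = - n then single (fst k + d + 2 * \<sigma> * r, snd k) 1 else 0)
     + (\<Sum>a<M. vscale (?c a) (xm_vec i (n + \<sigma> * int a) (2 * int a) (Om_key \<sigma> B m (r - \<sigma> * int a) (fst k + d, snd k))))"
      by (rule Om_key_rec[OF sign Mk])
    also have "\<dots> = (if i = m \<and> r = - n then gshift (d + 2 * \<sigma> * r) (single k 1) else 0)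
     + (\<Sum>a<M. vscale (?c a) (xm_vec i (n + \<sigma> * int a) (d + 2 * int a) (Om_key \<sigma> B m (r - \<sigma> * int a) k)))"
      by (cases k) (simp add: Om_key_shift xm_vec_gshift algebra_simps)
    finally show "Om_key \<sigma> B m r (fst k + d, (i, n) # snd k) = \<dots>" .
  qed
  also have "\<dots> = (if i = m \<and> r = - n then gshift (d + 2 * \<sigma> * r) v else 0)
     + (\<Sum>a<M. vscale (?c a) (xm_vec i (n + \<sigma> * int a) (d + 2 * int a) (Om_vec \<sigma> B m (r - \<sigma> * int a) v)))"
    unfolding lin_ext_plus lin_ext_if_const lin_ext_sum_vscale xm_vec_Om_vec_lin_ext gshift_as_lin_ext[of _ v] ..
  finally show ?thesis .
qed


lemma xm_mon: "xm i n = mon [Xm i n]" by (simp add: xm_def gn_def)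

lemma coords_xm: "finsupp Y \<Longrightarrow> coords (fmul (xm i n) Y) = xm_vec i n 0 (coords Y)"
  unfolding xm_mon xm_vec_def by (simp add: coords_fmul_mon lift_coords_def) (rule lin_ext_cong, simp add: case_prod_beta)

lemma coords_gpow: "finsupp Y \<Longrightarrow> coords (fmul (gpow d) Y) = gshift d (coords Y)"
  unfolding gpow_mon gshift_def by (simp add: coords_fmul_mon lift_coords_def) (rule lin_ext_cong, simp add: case_prod_beta add.commute)

lemma finsupp_xm [simp]: "finsupp (xm i n)" by (simp add: xm_mon)

lemma coords_gpow_xm_prod: "finsupp Z \<Longrightarrow> coords (fprod [gpow d, xm i n, Z]) = xm_vec i n d (coords Z)"
proof -
  assume Z: "finsupp Z"
  have "fprod [gpow d, xm i n, Z] = fmul (gpow d) (fmul (xm i n) Z)" by (simp add: fprod_def)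
  then show ?thesis using Z by (simp add: coords_gpow coords_xm finsupp_fmul gshift_xm_vec)
qed

lemma nsub_gpow_xm_prod: "Z \<in> nsub N \<Longrightarrow> i \<in> {1..N} \<Longrightarrow> fprod [gpow d, xm i n, Z] \<in> nsub N"
  by (simp add: fprod_def nsub_fmul nsub_xm)

lemma nsub_finsupp: "X \<in> nsub N \<Longrightarrow> finsupp X" by (simp add: nsub_iff)

lemma Om_ueq_zero:
  assumes "\<sigma> = 1 \<or> \<sigma> = -1" "P \<in> nsub N" "mode_bound (coords P) + \<sigma> * r < int a"
  shows "ueq N B (Om \<sigma> B m (r - \<sigma> * int a) P) fzero"
proof (rule ueq_coords)
  have "\<sigma> * (r - \<sigma> * int a) < - mode_bound (coords P)"
    using assms(1,3) by (auto simp: algebra_simps)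
  then show "coords (Om \<sigma> B m (r - \<sigma> * int a) P) = coords fzero"
    using assms(2) by (simp add: coords_Om nsub_finsupp Om_vec_vanish[OF assms(1)])
qed (use assms(2) in \<open>simp_all add: nsub_Om\<close>)

lemma Om_xm_expansion:
  assumes sign: "\<sigma> = 1 \<or> \<sigma> = -1" and P: "P \<in> nsub N" and i: "i \<in> {1..N}" and sym: "B m i = B i m"
  shows "\<exists>M. (\<forall>a\<ge>M. ueq N B (Om \<sigma> B m (r - \<sigma> * int a) P) fzero) \<and>
     ueq N B (Om \<sigma> B m r (fmul (xm i n) P))
       (fadd (if i = m \<and> r = - n then fmul (gpow (2 * \<sigma> * r)) P else fzero)
          (fsum (\<lambda>a. fsmul (gcoef (qpow (- \<sigma> * B i m)) a)
              (fprod [gpow (2 * int a), xm i (n + \<sigma> * int a), Om \<sigma> B m (r - \<sigma> * int a) P])) {..<M}))"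
proof (intro exI conjI allI impI)
  define M where "M = nat (mode_bound (coords P) + \<sigma> * r) + 1"
  show "ueq N B (Om \<sigma> B m (r - \<sigma> * int a) P) fzero" if "M \<le> a" for a
    using that by (intro Om_ueq_zero[OF sign P]) (simp add: M_def)
  let ?X = "if i = m \<and> r = - n then fmul (gpow (2 * \<sigma> * r)) P else fzero"
  let ?T = "\<lambda>a. fprod [gpow (2 * int a), xm i (n + \<sigma> * int a), Om \<sigma> B m (r - \<sigma> * int a) P]"
  let ?Y = "fsum (\<lambda>a. fsmul (gcoef (qpow (- \<sigma> * B i m)) a) (?T a)) {..<M}"
  have T: "?T a \<in> nsub N" for a using P i by (intro nsub_gpow_xm_prod nsub_Om)
  have X: "?X \<in> nsub N" using P by (auto intro: nsub_fmul)
  have Y: "?Y \<in> nsub N" using T by (intro nsub_fsum nsub_fsmul) auto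
  have cutoff: "nat (mode_bound (coords P) + \<sigma> * r) < M" by (simp add: M_def)
  have "coords (Om \<sigma> B m r (fmul (xm i n) P)) = Om_vec \<sigma> B m r (xm_vec i n 0 (coords P))"
    using P by (simp add: coords_Om coords_xm nsub_finsupp finsupp_fmul)
  also have "\<dots> = coords ?X + (\<Sum>a<M. coords (fsmul (gcoef (qpow (- \<sigma> * B i m)) a) (?T a)))"
  proof -
    have "coords (fsmul c (?T a)) = vscale c (xm_vec i (n + \<sigma> * int a) (2 * int a)
        (Om_vec \<sigma> B m (r - \<sigma> * int a) (coords P)))" for a c
      using P T[of a] by (simp add: coords_fsmul nsub_finsupp coords_gpow_xm_prod coords_Om finsupp_Om)
    then show ?thesis
      unfolding Om_vec_rec[OF sign cutoff] sym using P by (simp add: coords_gpow nsub_finsupp)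
  qed
  also have "\<dots> = coords ?X + coords ?Y"
    using T by (subst coords_fsum) (auto intro: finsupp_fsmul nsub_finsupp)
  also have "\<dots> = coords (fadd ?X ?Y)"
    using X Y by (simp add: coords_fadd nsub_finsupp)
  finally show "ueq N B (Om \<sigma> B m r (fmul (xm i n) P)) (fadd ?X ?Y)"
    using P i X Y by (intro ueq_coords nsub_fadd nsub_Om nsub_fmul nsub_xm)
qed


section \<open>Taylor coefficients of \<open>g\<close>\<close>

lemma qh_nonzero: "qh \<noteq> 0" by (simp add: qh_def Zero_fract_def eq_fract)
lemma qq_nonzero: "qq \<noteq> 0" by (simp add: qq_def qh_nonzero)
lemma qpow_nonzero [simp]: "qpow k \<noteq> 0" by (simp add: qpow_def qq_nonzero)
lemma qpow_neg: "qpow (- k) = inverse (qpow k)" by (simp add: qpow_def power_int_minus)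
lemma gser_mul:
  assumes Q: "Q \<noteq> 0"
  shows "gser Q * (fps_X - fps_const Q) = fps_const Q * fps_X - 1"
proof -
  have "fps_nth (fps_X - fps_const Q) 0 \<noteq> 0" using Q by simp
  then have "inverse (fps_X - fps_const Q) * (fps_X - fps_const Q) = 1" by (rule inverse_mult_eq_1)
  then show ?thesis by (simp add: gser_def mult.assoc)
qed

lemma gcoef_rec:
  assumes Q: "Q \<noteq> 0"
  shows "(if n = 0 then 0 else gcoef Q (n - 1)) - Q * gcoef Q n = (if n = 1 then Q else if n = 0 then -1 else 0)"
proof -
  have "fps_nth (gser Q * (fps_X - fps_const Q)) n = fps_nth (fps_const Q * fps_X - 1) n"
    by (simp only: gser_mul[OF Q])
  then show ?thesis by (simp add: algebra_simps gcoef_def fps_X_nth split: if_splits)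
qed

text \<open>The coefficient form of \<open>(t - Q) g(t) = Q t - 1\<close> for \<open>Q = q^(-\<sigma> b)\<close>, with the
  coefficients indexed by integers (vanishing at negative indices).\<close>

lemma gcoef_delta_identity:
  fixes b \<sigma> t :: int
  assumes "\<sigma> = 1 \<or> \<sigma> = -1"
  defines "d \<equiv> \<lambda>t::int. if 0 \<le> t then gcoef (qpow (- \<sigma> * b)) (nat t) else 0"
  shows "qpow b * (if t = 0 then 1 else 0) - (if t = \<sigma> then 1 else 0) = d t - qpow b * d (t - \<sigma>)"
  using assms(1)
proof
  assume \<sigma>: "\<sigma> = 1"
  show ?thesis
  proof (cases "t < 0")
    case False
    define n where "n = nat t"
    then have t: "t = int n" using False by simp
    let ?c = "gcoef (qpow (- b))"
    have "(if n = 0 then 0 else ?c (n - 1)) - qpow (- b) * ?c n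
        = (if n = 1 then qpow (- b) else if n = 0 then -1 else 0)"
      by (rule gcoef_rec) simp
    then have "qpow b * ((if n = 0 then 0 else ?c (n - 1)) - qpow (- b) * ?c n)
        = qpow b * (if n = 1 then qpow (- b) else if n = 0 then -1 else 0)" by simp
    moreover have "qpow b * qpow (- b) = 1" by (simp add: qpow_neg)
    ultimately have key: "?c n - qpow b * (if n = 0 then 0 else ?c (n - 1))
        = qpow b * (if n = 0 then 1 else 0) - (if n = 1 then 1 else 0)"
      by (simp add: right_diff_distrib mult.assoc[symmetric] split: if_splits)
        (subst minus_diff_eq[symmetric], simp)
    have "d t = ?c n" "d (t - \<sigma>) = (if n = 0 then 0 else ?c (n - 1))"
      using \<sigma> t by (simp add: d_def, cases n, simp_all add: d_def)
    with key show ?thesis using \<sigma> t by simp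
  qed (use \<sigma> in \<open>simp add: d_def\<close>)
next
  assume \<sigma>: "\<sigma> = -1"
  show ?thesis
  proof (cases "t < -1")
    case False
    define n where "n = nat (t + 1)"
    then have t: "t = int n - 1" using False by simp
    have "(if n = 0 then 0 else gcoef (qpow b) (n - 1)) - qpow b * gcoef (qpow b) n
        = (if n = 1 then qpow b else if n = 0 then -1 else 0)"
      by (rule gcoef_rec) simp
    then show ?thesis using \<sigma> t by (auto simp: d_def of_nat_diff nat_diff_distrib split: if_splits)
  qed (use \<sigma> in \<open>simp add: d_def\<close>)
qed


section \<open>Exchange relations\<close>

lemma sum3_diff_eq_swap12:
  fixes X1 X2 X3 Y1 Y2 Y3 Z1 Z2 Z3 W1 W2 W3 :: "'a::ab_group_add"
  assumes "X1 - Y1 = Z2 - W2" "X2 - Y2 = Z1 - W1" "X3 - Y3 = Z3 - W3"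
  shows "(X1 + X2 + X3) - (Y1 + Y2 + Y3) = (Z1 + Z2 + Z3) - (W1 + W2 + W3)"
proof -
  have "(X1 + X2 + X3) - (Y1 + Y2 + Y3) = (X1 - Y1) + (X2 - Y2) + (X3 - Y3)" by (simp add: algebra_simps)
  also have "\<dots> = (Z2 - W2) + (Z1 - W1) + (Z3 - W3)" using assms by simp
  also have "\<dots> = (Z1 + Z2 + Z3) - (W1 + W2 + W3)" by (simp add: algebra_simps)
  finally show ?thesis .
qed

lemma gshift_xm_vec_commute: "gshift g (xm_vec i n d v) = xm_vec i n d (gshift g v)"
  by (simp add: gshift_xm_vec xm_vec_gshift add.commute)

lemma Om_vec_Nil [simp]: "Om_vec \<sigma> B i r (single (e, []) c) = 0"
  by (simp add: Om_vec_def Om_key_def)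

lemma sum_delta_collapse:
  fixes \<sigma> r n :: int and f :: "int \<Rightarrow> vec" and c :: "nat \<Rightarrow> F"
  assumes "\<sigma> = 1 \<or> \<sigma> = -1" and "\<bar>\<sigma> * (- n - r)\<bar> < int M"
  shows "(\<Sum>a<M. vscale (c a) (if r = - (n + \<sigma> * int a) then f (int a) else 0))
       = vscale (if 0 \<le> \<sigma> * (- n - r) then c (nat (\<sigma> * (- n - r))) else 0) (f (\<sigma> * (- n - r)))"
proof -
  define s where "s = \<sigma> * (- n - r)"
  have iff: "r = - (n + \<sigma> * int a) \<longleftrightarrow> int a = s" for a
    using assms(1) by (auto simp: s_def algebra_simps)
  have "(\<Sum>a<M. vscale (c a) (if r = - (n + \<sigma> * int a) then f (int a) else 0))
      = (\<Sum>a<M. vscale (c a) (if int a = s then f (int a) else 0))"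
    by (simp only: iff)
  also have "\<dots> = (\<Sum>a<M. if a = nat s then (if 0 \<le> s then vscale (c (nat s)) (f s) else 0) else 0)"
    by (rule sum.cong) auto
  also have "\<dots> = vscale (if 0 \<le> s then c (nat s) else 0) (f s)"
  proof -
    have "0 \<le> s \<Longrightarrow> nat s < M" using assms(2) by (auto simp: s_def)
    then show ?thesis by simp
  qed
  finally show ?thesis by (simp only: s_def)
qed

text \<open>With \<open>t = \<sigma>(-n - r2)\<close>, every nonzero term on either side is a multiple of the same
  vector, so the identity reduces to \<open>gcoef_delta_identity\<close>.\<close>

lemma delta_exchange:
  fixes F :: "int \<Rightarrow> vec" and \<sigma> \<tau> b :: int
  assumes \<sigma>: "\<sigma> = 1 \<or> \<sigma> = -1" and c: "P \<Longrightarrow> c = gcoef (qpow (- \<sigma> * b))"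
    and M: "\<bar>n\<bar> + \<bar>r2\<bar> + 1 < int M"
  defines "g \<equiv> 2 * (\<tau> - \<sigma>)"
  shows "vscale (qpow b) (gshift g (if P \<and> r2 = - n then gshift (2 * \<tau> * r2) (F (r1 + 1)) else 0))
      - (if P \<and> r2 + 1 = - n then gshift (2 * \<tau> * (r2 + 1)) (F r1) else 0)
   = gshift g (\<Sum>a<M. vscale (c a) (if P \<and> r2 = - (n + \<sigma> * int a)
        then gshift (2 * int a + 2 * \<tau> * r2) (F (r1 + 1 - \<sigma> * int a)) else 0))
     - vscale (qpow b) (\<Sum>a<M. vscale (c a) (if P \<and> r2 + 1 = - (n + \<sigma> * int a)
        then gshift (2 * int a + 2 * \<tau> * (r2 + 1)) (F (r1 - \<sigma> * int a)) else 0))"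
proof (cases P)
  case True
  define t where "t = \<sigma> * (- n - r2)"
  define Z where "Z s = gshift (g + 2 * s + 2 * \<tau> * r2) (F (r1 + 1 - \<sigma> * s))" for s
  define d where "d s = (if 0 \<le> s then c (nat s) else 0)" for s
  have \<sigma>\<sigma>: "\<sigma> * \<sigma> = 1" using \<sigma> by auto
  have sum1: "gshift g (\<Sum>a<M. vscale (c a) (if P \<and> r2 = - (n + \<sigma> * int a)
        then gshift (2 * int a + 2 * \<tau> * r2) (F (r1 + 1 - \<sigma> * int a)) else 0)) = vscale (d t) (Z t)"
  proof -
    have "gshift g (\<Sum>a<M. vscale (c a) (if P \<and> r2 = - (n + \<sigma> * int a)
        then gshift (2 * int a + 2 * \<tau> * r2) (F (r1 + 1 - \<sigma> * int a)) else 0))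
      = (\<Sum>a<M. vscale (c a) (if r2 = - (n + \<sigma> * int a) then Z (int a) else 0))"
      using True by (simp add: gshift_sum gshift_vscale gshift_gshift if_distrib Z_def add.assoc cong: if_cong)
    also have "\<dots> = vscale (d t) (Z t)"
      using sum_delta_collapse[OF \<sigma>] \<sigma> M by (auto simp: t_def d_def)
    finally show ?thesis .
  qed
  have sum2: "(\<Sum>a<M. vscale (c a) (if P \<and> r2 + 1 = - (n + \<sigma> * int a)
        then gshift (2 * int a + 2 * \<tau> * (r2 + 1)) (F (r1 - \<sigma> * int a)) else 0)) = vscale (d (t - \<sigma>)) (Z t)"
  proof -
    have "(\<Sum>a<M. vscale (c a) (if P \<and> r2 + 1 = - (n + \<sigma> * int a)
        then gshift (2 * int a + 2 * \<tau> * (r2 + 1)) (F (r1 - \<sigma> * int a)) else 0))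
      = (\<Sum>a<M. vscale (c a) (if r2 + 1 = - (n + \<sigma> * int a) then Z (int a + \<sigma>) else 0))"
      using True \<sigma>\<sigma> by (simp add: Z_def g_def algebra_simps cong: if_cong)
    also have "\<dots> = vscale (d (t - \<sigma>)) (Z t)"
      using sum_delta_collapse[OF \<sigma>, of n "r2 + 1" M c "\<lambda>s. Z (s + \<sigma>)"] \<sigma> M
      by (auto simp: t_def d_def algebra_simps)
    finally show ?thesis .
  qed
  have lhs: "vscale (qpow b) (gshift g (if P \<and> r2 = - n then gshift (2 * \<tau> * r2) (F (r1 + 1)) else 0))
      - (if P \<and> r2 + 1 = - n then gshift (2 * \<tau> * (r2 + 1)) (F r1) else 0)
    = vscale (qpow b * (if t = 0 then 1 else 0) - (if t = \<sigma> then 1 else 0)) (Z t)"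
  proof -
    have e0: "r2 = - n \<longleftrightarrow> t = 0" and e1: "r2 + 1 = - n \<longleftrightarrow> t = \<sigma>"
      using \<sigma> by (auto simp: t_def algebra_simps)
    have "t = 0 \<Longrightarrow> gshift g (gshift (2 * \<tau> * r2) (F (r1 + 1))) = Z t"
      by (simp add: Z_def gshift_gshift)
    moreover have "t = \<sigma> \<Longrightarrow> gshift (2 * \<tau> * (r2 + 1)) (F r1) = Z t"
      using \<sigma>\<sigma> by (simp add: Z_def g_def algebra_simps)
    moreover have "\<sigma> \<noteq> 0" using \<sigma> by auto
    ultimately show ?thesis
      using True by (auto simp: e0 e1 vscale_diff_left)
  qed
  have "qpow b * (if t = 0 then 1 else 0) - (if t = \<sigma> then 1 else 0) = d t - qpow b * d (t - \<sigma>)"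
    using gcoef_delta_identity[OF \<sigma>, of b t] c[OF True] by (simp add: d_def)
  then show ?thesis
    unfolding lhs sum1 sum2 by (simp add: vscale_diff_left)
qed simp

lemma delta_exchange_sym:
  fixes G :: "int \<Rightarrow> vec" and \<sigma> \<tau> b :: int
  assumes \<tau>: "\<tau> = 1 \<or> \<tau> = -1" and c: "P \<Longrightarrow> c = gcoef (qpow (- \<tau> * b))"
    and M: "\<bar>n\<bar> + \<bar>r1\<bar> + 1 < int M"
  defines "g \<equiv> 2 * (\<tau> - \<sigma>)"
  shows "vscale (qpow b) (gshift g (\<Sum>a<M. vscale (c a) (if P \<and> r1 + 1 = - (n + \<tau> * int a)
        then gshift (2 * int a + 2 * \<sigma> * (r1 + 1)) (G (r2 - \<tau> * int a)) else 0)))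
      - (\<Sum>a<M. vscale (c a) (if P \<and> r1 = - (n + \<tau> * int a)
        then gshift (2 * int a + 2 * \<sigma> * r1) (G (r2 + 1 - \<tau> * int a)) else 0))
   = gshift g (if P \<and> r1 + 1 = - n then gshift (2 * \<sigma> * (r1 + 1)) (G r2) else 0)
     - vscale (qpow b) (if P \<and> r1 = - n then gshift (2 * \<sigma> * r1) (G (r2 + 1)) else 0)"
  (is "vscale _ (gshift g ?S2) - ?S1 = gshift g ?A2 - vscale _ ?A1")
proof -
  have "vscale (qpow b) (gshift (2 * (\<sigma> - \<tau>)) ?A1) - ?A2 = gshift (2 * (\<sigma> - \<tau>)) ?S1 - vscale (qpow b) ?S2"
    by (rule delta_exchange[OF \<tau> c M])
  then have "gshift g (vscale (qpow b) (gshift (2 * (\<sigma> - \<tau>)) ?A1) - ?A2)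
      = gshift g (gshift (2 * (\<sigma> - \<tau>)) ?S1 - vscale (qpow b) ?S2)"
    by (rule arg_cong)
  moreover have "g + 2 * (\<sigma> - \<tau>) = 0" by (simp add: g_def)
  ultimately have "vscale (qpow b) ?A1 - gshift g ?A2 = ?S1 - vscale (qpow b) (gshift g ?S2)"
    by (simp only: gshift_diff gshift_vscale gshift_gshift gshift_0)
  then have "- (vscale (qpow b) ?A1 - gshift g ?A2) = - (?S1 - vscale (qpow b) (gshift g ?S2))"
    by (rule arg_cong)
  then show ?thesis by (simp only: minus_diff_eq)
qed

text \<open>Truncation point for both sums in the two-step expansion below; all later terms vanish.\<close>

definition expansion_cutoff ::
    "int \<Rightarrow> (nat \<Rightarrow> nat \<Rightarrow> int) \<Rightarrow> nat \<Rightarrow> int \<Rightarrow> int \<Rightarrow> nat \<Rightarrow> int \<Rightarrow> vec \<Rightarrow> nat" where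
  "expansion_cutoff \<sigma> B j s \<tau> k t Y =
     (let M0 = nat (mode_bound Y + \<tau> * t) + 1
      in M0 + (\<Sum>a<M0. nat (mode_bound (Om_vec \<tau> B k (t - \<tau> * int a) Y) + \<sigma> * s)) + nat (\<sigma> * s) + 1)"

lemma Om_vec_Om_vec_xm_vec:
  assumes \<sigma>: "\<sigma> = 1 \<or> \<sigma> = -1" and \<tau>: "\<tau> = 1 \<or> \<tau> = -1"
    and M: "expansion_cutoff \<sigma> B j s \<tau> k t Y \<le> M"
  shows "Om_vec \<sigma> B j s (Om_vec \<tau> B k t (xm_vec i n 0 Y)) =
   (if i = k \<and> t = - n then gshift (2 * \<tau> * t) (Om_vec \<sigma> B j s Y) else 0)
   + (\<Sum>a<M. vscale (gcoef (qpow (- \<tau> * B k i)) a)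
        (if i = j \<and> s = - (n + \<tau> * int a)
         then gshift (2 * int a + 2 * \<sigma> * s) (Om_vec \<tau> B k (t - \<tau> * int a) Y) else 0))
   + (\<Sum>a<M. \<Sum>b<M. vscale (gcoef (qpow (- \<tau> * B k i)) a * gcoef (qpow (- \<sigma> * B j i)) b)
        (xm_vec i (n + \<tau> * int a + \<sigma> * int b) (2 * int a + 2 * int b)
           (Om_vec \<sigma> B j (s - \<sigma> * int b) (Om_vec \<tau> B k (t - \<tau> * int a) Y))))"
proof -
  let ?W = "\<lambda>a. Om_vec \<tau> B k (t - \<tau> * int a) Y"
  let ?c = "\<lambda>b. gcoef (qpow (- \<sigma> * B j i)) b"
  define M0 where "M0 = nat (mode_bound Y + \<tau> * t) + 1"
  have inner_cutoff: "nat (mode_bound (?W a) + \<sigma> * s) < M" for a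
  proof (cases "a < M0")
    case True
    have "nat (mode_bound (?W a) + \<sigma> * s) \<le> (\<Sum>a<M0. nat (mode_bound (?W a) + \<sigma> * s))"
      by (rule member_le_sum) (use True in auto)
    then show ?thesis using M by (simp add: expansion_cutoff_def M0_def Let_def)
  next
    case False
    have "\<tau> * (t - \<tau> * int a) = \<tau> * t - int a" using \<tau> by (auto simp: algebra_simps)
    then have "?W a = 0" using False by (intro Om_vec_vanish[OF \<tau>]) (simp add: M0_def)
    then show ?thesis using M by (simp add: expansion_cutoff_def Let_def)
  qed
  have outer: "Om_vec \<tau> B k t (xm_vec i n 0 Y) =
       (if i = k \<and> t = - n then gshift (0 + 2 * \<tau> * t) Y else 0)
       + (\<Sum>a<M. vscale (gcoef (qpow (- \<tau> * B k i)) a) (xm_vec i (n + \<tau> * int a) (0 + 2 * int a) (?W a)))"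
    using M by (intro Om_vec_rec[OF \<tau>]) (simp add: expansion_cutoff_def Let_def)
  have inner: "Om_vec \<sigma> B j s (xm_vec i (n + \<tau> * int a) (2 * int a) (?W a)) =
       (if i = j \<and> s = - (n + \<tau> * int a) then gshift (2 * int a + 2 * \<sigma> * s) (?W a) else 0)
       + (\<Sum>b<M. vscale (?c b) (xm_vec i (n + \<tau> * int a + \<sigma> * int b) (2 * int a + 2 * int b)
           (Om_vec \<sigma> B j (s - \<sigma> * int b) (?W a))))" for a
    by (rule Om_vec_rec[OF \<sigma> inner_cutoff])
  show ?thesis
    unfolding outer
    by (simp add: Om_vec_add Om_vec_sum Om_vec_vscale Om_vec_gshift inner vscale_add vscale_sum
        sum.distrib add.assoc)
qed

lemma double_sum_exchange:
  assumes "\<And>a b. vscale Q (gshift g (X a b)) - Y a b = gshift g (X' b a) - vscale Q (Y' b a)"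
  shows "vscale Q (gshift g (\<Sum>a<M. \<Sum>b<M. vscale (c a * d b)
          (xm_vec i (n + s a + t b) (2 * int a + 2 * int b) (X a b))))
      - (\<Sum>a<M. \<Sum>b<M. vscale (c a * d b) (xm_vec i (n + s a + t b) (2 * int a + 2 * int b) (Y a b)))
    = gshift g (\<Sum>a<M. \<Sum>b<M. vscale (d a * c b)
          (xm_vec i (n + t a + s b) (2 * int a + 2 * int b) (X' a b)))
      - vscale Q (\<Sum>a<M. \<Sum>b<M. vscale (d a * c b)
          (xm_vec i (n + t a + s b) (2 * int a + 2 * int b) (Y' a b)))"
proof -
  have "vscale Q (gshift g (\<Sum>a<M. \<Sum>b<M. vscale (c a * d b)
          (xm_vec i (n + s a + t b) (2 * int a + 2 * int b) (X a b))))
      - (\<Sum>a<M. \<Sum>b<M. vscale (c a * d b) (xm_vec i (n + s a + t b) (2 * int a + 2 * int b) (Y a b)))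
    = (\<Sum>a<M. \<Sum>b<M. vscale (c a * d b) (xm_vec i (n + s a + t b) (2 * int a + 2 * int b)
          (vscale Q (gshift g (X a b)) - Y a b)))"
    by (simp add: gshift_sum vscale_sum gshift_vscale gshift_xm_vec_commute xm_vec_diff xm_vec_vscale
        vscale_diff sum_subtractf mult.commute)
  also have "\<dots> = (\<Sum>b<M. \<Sum>a<M. vscale (d b * c a) (xm_vec i (n + t b + s a) (2 * int b + 2 * int a)
          (gshift g (X' b a) - vscale Q (Y' b a))))"
    by (subst sum.swap) (simp add: assms mult.commute add.commute add.left_commute)
  also have "\<dots> = gshift g (\<Sum>a<M. \<Sum>b<M. vscale (d a * c b)
          (xm_vec i (n + t a + s b) (2 * int a + 2 * int b) (X' a b)))
      - vscale Q (\<Sum>a<M. \<Sum>b<M. vscale (d a * c b)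
          (xm_vec i (n + t a + s b) (2 * int a + 2 * int b) (Y' a b)))"
    by (simp add: gshift_sum vscale_sum gshift_vscale gshift_xm_vec_commute xm_vec_diff xm_vec_vscale
        vscale_diff sum_subtractf mult.commute)
  finally show ?thesis .
qed

lemma Om_vec_as_lin_ext: "Om_vec \<sigma> B i r v = lin_ext (\<lambda>k. Om_vec \<sigma> B i r (single k 1)) v"
  by (simp add: Om_vec_def)

lemma Om_vec_lin_ext: "Om_vec \<sigma> B i r (lin_ext f v) = lin_ext (\<lambda>k. Om_vec \<sigma> B i r (f k)) v"
  unfolding Om_vec_def by (rule lin_ext_lin_ext)

lemma gshift_lin_ext: "gshift g (lin_ext f v) = lin_ext (\<lambda>k. gshift g (f k)) v"
  unfolding gshift_def by (rule lin_ext_lin_ext)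

lemma vscale_lin_ext: "vscale Q (lin_ext f v) = lin_ext (\<lambda>k. vscale Q (f k)) v"
  by (simp add: lin_ext_def vscale_sum mult.commute)

lemma lin_ext_minus: "lin_ext f v - lin_ext h v = lin_ext (\<lambda>k. f k - h k) v"
  by (simp add: lin_ext_def vscale_diff sum_subtractf)

lemma Om_vec_Om_vec_as_lin_ext: "Om_vec \<sigma>1 B j s1 (Om_vec \<sigma>2 B k s2 v) = lin_ext (\<lambda>kk. Om_vec \<sigma>1 B j s1 (Om_vec \<sigma>2 B k s2 (single kk 1))) v"
  by (subst Om_vec_as_lin_ext[of \<sigma>2]) (rule Om_vec_lin_ext)

lemma Om_vec_exchange_single:
  fixes \<sigma> \<tau> :: int
  assumes \<sigma>: "\<sigma> = 1 \<or> \<sigma> = -1" and \<tau>: "\<tau> = 1 \<or> \<tau> = -1" and sym: "B k j = B j k"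
  defines "g \<equiv> 2 * (\<tau> - \<sigma>)" and "Q \<equiv> qpow (B j k)"
  shows "vscale Q (gshift g (Om_vec \<sigma> B j (r1 + 1) (Om_vec \<tau> B k r2 (single (e, xs) 1))))
      - Om_vec \<sigma> B j r1 (Om_vec \<tau> B k (r2 + 1) (single (e, xs) 1))
    = gshift g (Om_vec \<tau> B k r2 (Om_vec \<sigma> B j (r1 + 1) (single (e, xs) 1)))
      - vscale Q (Om_vec \<tau> B k (r2 + 1) (Om_vec \<sigma> B j r1 (single (e, xs) 1)))"
proof (induction xs arbitrary: r1 r2)
  case Nil
  show ?case by simp
next
  case (Cons x ys)
  obtain i n where x: "x = (i, n)" by (cases x)
  let ?Y = "single (e, ys) (1::F)"
  define M where "M = expansion_cutoff \<sigma> B j (r1 + 1) \<tau> k r2 ?Y + expansion_cutoff \<sigma> B j r1 \<tau> k (r2 + 1) ?Y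
    + expansion_cutoff \<tau> B k r2 \<sigma> j (r1 + 1) ?Y + expansion_cutoff \<tau> B k (r2 + 1) \<sigma> j r1 ?Y
    + nat (\<bar>n\<bar> + \<bar>r1\<bar> + \<bar>r2\<bar>) + 2"
  have cutoffs: "expansion_cutoff \<sigma> B j (r1 + 1) \<tau> k r2 ?Y \<le> M" "expansion_cutoff \<sigma> B j r1 \<tau> k (r2 + 1) ?Y \<le> M"
    "expansion_cutoff \<tau> B k r2 \<sigma> j (r1 + 1) ?Y \<le> M" "expansion_cutoff \<tau> B k (r2 + 1) \<sigma> j r1 ?Y \<le> M"
    and large: "\<bar>n\<bar> + \<bar>r2\<bar> + 1 < int M" "\<bar>n\<bar> + \<bar>r1\<bar> + 1 < int M"
    unfolding M_def by linarith+
  have IH: "vscale Q (gshift g (Om_vec \<sigma> B j (r1 + 1 - \<sigma> * int b) (Om_vec \<tau> B k (r2 - \<tau> * int a) ?Y)))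
       - Om_vec \<sigma> B j (r1 - \<sigma> * int b) (Om_vec \<tau> B k (r2 + 1 - \<tau> * int a) ?Y)
     = gshift g (Om_vec \<tau> B k (r2 - \<tau> * int a) (Om_vec \<sigma> B j (r1 + 1 - \<sigma> * int b) ?Y))
       - vscale Q (Om_vec \<tau> B k (r2 + 1 - \<tau> * int a) (Om_vec \<sigma> B j (r1 - \<sigma> * int b) ?Y))" for a b
    using Cons.IH[of "r1 - \<sigma> * int b" "r2 - \<tau> * int a"] by (simp add: algebra_simps)
  have v: "single (e, x # ys) 1 = xm_vec i n 0 ?Y" by (simp add: x)
  have c\<sigma>: "i = k \<Longrightarrow> gcoef (qpow (- \<sigma> * B j i)) = gcoef (qpow (- \<sigma> * B j k))"
    and c\<tau>: "i = j \<Longrightarrow> gcoef (qpow (- \<tau> * B k i)) = gcoef (qpow (- \<tau> * B j k))"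
    using sym by simp_all
  show ?case
    unfolding v Om_vec_Om_vec_xm_vec[OF \<sigma> \<tau> cutoffs(1)] Om_vec_Om_vec_xm_vec[OF \<sigma> \<tau> cutoffs(2)]
      Om_vec_Om_vec_xm_vec[OF \<tau> \<sigma> cutoffs(3)] Om_vec_Om_vec_xm_vec[OF \<tau> \<sigma> cutoffs(4)]
      gshift_add vscale_add g_def Q_def
    by (rule sum3_diff_eq_swap12[OF delta_exchange[OF \<sigma> c\<sigma> large(1), where F = "\<lambda>s. Om_vec \<sigma> B j s ?Y"]
          delta_exchange_sym[OF \<tau> c\<tau> large(2), where G = "\<lambda>s. Om_vec \<tau> B k s ?Y"]
          double_sum_exchange[OF IH[unfolded g_def Q_def]]])
qed

lemma Om_vec_exchange:
  fixes \<sigma> \<tau> :: int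
  assumes "\<sigma> = 1 \<or> \<sigma> = -1" "\<tau> = 1 \<or> \<tau> = -1" "B k j = B j k"
  defines "g \<equiv> 2 * (\<tau> - \<sigma>)" and "Q \<equiv> qpow (B j k)"
  shows "vscale Q (gshift g (Om_vec \<sigma> B j (r1 + 1) (Om_vec \<tau> B k r2 v))) - Om_vec \<sigma> B j r1 (Om_vec \<tau> B k (r2 + 1) v)
    = gshift g (Om_vec \<tau> B k r2 (Om_vec \<sigma> B j (r1 + 1) v)) - vscale Q (Om_vec \<tau> B k (r2 + 1) (Om_vec \<sigma> B j r1 v))"
  unfolding Om_vec_Om_vec_as_lin_ext[of \<sigma> B j _ \<tau> k _ v] Om_vec_Om_vec_as_lin_ext[of \<tau> B k _ \<sigma> j _ v] gshift_lin_ext vscale_lin_ext lin_ext_minus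
proof (rule lin_ext_cong)
  fix kk :: key
  show "vscale Q (gshift g (Om_vec \<sigma> B j (r1 + 1) (Om_vec \<tau> B k r2 (single kk 1))))
      - Om_vec \<sigma> B j r1 (Om_vec \<tau> B k (r2 + 1) (single kk 1))
    = gshift g (Om_vec \<tau> B k r2 (Om_vec \<sigma> B j (r1 + 1) (single kk 1)))
      - vscale Q (Om_vec \<tau> B k (r2 + 1) (Om_vec \<sigma> B j r1 (single kk 1)))"
    using Om_vec_exchange_single[where B = B and j = j and k = k, OF assms(1-3), of r1 r2 "fst kk" "snd kk"] by (simp add: g_def Q_def)
qed

lemma Om_exchange:
  assumes "\<sigma> = 1 \<or> \<sigma> = -1" "\<tau> = 1 \<or> \<tau> = -1" "B k j = B j k" and P: "P \<in> nsub N"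
  shows "ueq N B
    (fsub (fsmul (qpow (B j k)) (fmul (gpow (2 * (\<tau> - \<sigma>))) (Om \<sigma> B j (r1 + 1) (Om \<tau> B k r2 P))))
          (Om \<sigma> B j r1 (Om \<tau> B k (r2 + 1) P)))
    (fsub (fmul (gpow (2 * (\<tau> - \<sigma>))) (Om \<tau> B k r2 (Om \<sigma> B j (r1 + 1) P)))
          (fsmul (qpow (B j k)) (Om \<tau> B k (r2 + 1) (Om \<sigma> B j r1 P))))"
proof (rule ueq_coords)
  note closed = nsub_fsub nsub_fsmul nsub_fmul nsub_gpow nsub_Om P
  show "fsub (fsmul (qpow (B j k)) (fmul (gpow (2 * (\<tau> - \<sigma>))) (Om \<sigma> B j (r1 + 1) (Om \<tau> B k r2 P))))
          (Om \<sigma> B j r1 (Om \<tau> B k (r2 + 1) P)) \<in> nsub N"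
    by (intro closed)
  show "fsub (fmul (gpow (2 * (\<tau> - \<sigma>))) (Om \<tau> B k r2 (Om \<sigma> B j (r1 + 1) P)))
          (fsmul (qpow (B j k)) (Om \<tau> B k (r2 + 1) (Om \<sigma> B j r1 P))) \<in> nsub N"
    by (intro closed)
  show "coords (fsub (fsmul (qpow (B j k)) (fmul (gpow (2 * (\<tau> - \<sigma>))) (Om \<sigma> B j (r1 + 1) (Om \<tau> B k r2 P))))
          (Om \<sigma> B j r1 (Om \<tau> B k (r2 + 1) P)))
      = coords (fsub (fmul (gpow (2 * (\<tau> - \<sigma>))) (Om \<tau> B k r2 (Om \<sigma> B j (r1 + 1) P)))
          (fsmul (qpow (B j k)) (Om \<tau> B k (r2 + 1) (Om \<sigma> B j r1 P))))"
    using Om_vec_exchange[where B = B and j = j and k = k, OF assms(1-3), of r1 r2 "coords P"] P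
    by (simp add: nsub_finsupp coords_fsub coords_fsmul coords_gpow coords_Om finsupp_Om
        finsupp_fsmul finsupp_fmul finsupp_fsub)
qed

lemma simple_form_sym:
  assumes "simple_form N B" "i \<in> {1..N}" "j \<in> {1..N}"
  shows "B i j = B j i"
  using assms by (simp add: simple_form_def)

lemma gpow_0: "gpow 0 = fone"
  by (simp add: gpow_def fpow_def)

lemma OmPsi_xm:
  assumes "P \<in> nsub N" "i \<in> {1..N}" "B m i = B i m"
  shows "\<exists>M. (\<forall>a\<ge>M. ueq N B (OmPsi B m (r - int a) P) fzero) \<and>
        ueq N B (OmPsi B m r (fmul (xm i n) P))
          (fadd (if i = m \<and> r = - n then fmul (gpow (2 * r)) P else fzero)
                (fsum (\<lambda>a. fsmul (gcoef (qpow (- B i m)) a)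
                        (fprod [gpow (2 * int a), xm i (n + int a), OmPsi B m (r - int a) P])) {..<M}))"
  using Om_xm_expansion[where B = B and m = m and i = i, OF disjI1[OF refl] assms, of r n]
  by (simp only: OmPsi_Om mult_1 mult_1_right mult_minus1)

lemma OmPhi_xm:
  assumes "P \<in> nsub N" "i \<in> {1..N}" "B m i = B i m"
  shows "\<exists>M. (\<forall>a\<ge>M. ueq N B (OmPhi B m (r + int a) P) fzero) \<and>
        ueq N B (OmPhi B m r (fmul (xm i n) P))
          (fadd (if i = m \<and> r = - n then fmul (gpow (- 2 * r)) P else fzero)
                (fsum (\<lambda>a. fsmul (gcoef (qpow (B i m)) a)
                        (fprod [gpow (2 * int a), xm i (n - int a), OmPhi B m (r + int a) P])) {..<M}))"
  using Om_xm_expansion[where B = B and m = m and i = i, OF disjI2[OF refl] assms, of r n]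
  by (simp only: OmPhi_Om mult_minus1 mult_minus1_right minus_minus mult_1 diff_minus_eq_add
      add_uminus_conv_diff)

lemma OmPsi_OmPsi:
  assumes "P \<in> nsub N" "B k j = B j k"
  shows "ueq N B
        (fsub (fsmul (qpow (B j k)) (OmPsi B j (r1 + 1) (OmPsi B k r2 P)))
              (OmPsi B j r1 (OmPsi B k (r2 + 1) P)))
        (fsub (OmPsi B k r2 (OmPsi B j (r1 + 1) P))
              (fsmul (qpow (B j k)) (OmPsi B k (r2 + 1) (OmPsi B j r1 P))))"
  using Om_exchange[where \<sigma> = 1 and \<tau> = 1 and B = B and j = j and k = k, OF _ _ assms(2,1)]
  by (simp add: OmPsi_Om gpow_0)

lemma OmPhi_OmPhi:
  assumes "P \<in> nsub N" "B k j = B j k"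
  shows "ueq N B
        (fsub (fsmul (qpow (B j k)) (OmPhi B j (r1 + 1) (OmPhi B k r2 P)))
              (OmPhi B j r1 (OmPhi B k (r2 + 1) P)))
        (fsub (OmPhi B k r2 (OmPhi B j (r1 + 1) P))
              (fsmul (qpow (B j k)) (OmPhi B k (r2 + 1) (OmPhi B j r1 P))))"
  using Om_exchange[where \<sigma> = "-1" and \<tau> = "-1" and B = B and j = j and k = k, OF _ _ assms(2,1)]
  by (simp add: OmPhi_Om gpow_0)

lemma OmPhi_OmPsi:
  assumes "P \<in> nsub N" "B k j = B j k"
  shows "ueq N B
        (fsub (fsmul (qpow (B j k)) (fmul (gpow 4) (OmPhi B j (r1 + 1) (OmPsi B k r2 P))))
              (OmPhi B j r1 (OmPsi B k (r2 + 1) P)))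
        (fsub (fmul (gpow 4) (OmPsi B k r2 (OmPhi B j (r1 + 1) P)))
              (fsmul (qpow (B j k)) (OmPsi B k (r2 + 1) (OmPhi B j r1 P))))"
  using Om_exchange[where \<sigma> = "-1" and \<tau> = 1 and B = B and j = j and k = k, OF _ _ assms(2,1)]
  by (simp add: OmPhi_Om OmPsi_Om)

theorem mainTheorem3:
  fixes N :: nat and B :: "nat \<Rightarrow> nat \<Rightarrow> int"
  assumes "simple_form N B"
  shows
   "(\<forall>i\<in>{1..N}. \<forall>m\<in>{1..N}. \<forall>r n :: int. \<forall>P\<in>nsub N.
      \<exists>M. (\<forall>a\<ge>M. ueq N B (OmPsi B m (r - int a) P) fzero) \<and>
        ueq N B (OmPsi B m r (fmul (xm i n) P))
          (fadd (if i = m \<and> r = - n then fmul (gpow (2 * r)) P else fzero)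
                (fsum (\<lambda>a. fsmul (gcoef (qpow (- B i m)) a)
                        (fprod [gpow (2 * int a), xm i (n + int a), OmPsi B m (r - int a) P])) {..<M})))
  \<and> (\<forall>i\<in>{1..N}. \<forall>m\<in>{1..N}. \<forall>r n :: int. \<forall>P\<in>nsub N.
      \<exists>M. (\<forall>a\<ge>M. ueq N B (OmPhi B m (r + int a) P) fzero) \<and>
        ueq N B (OmPhi B m r (fmul (xm i n) P))
          (fadd (if i = m \<and> r = - n then fmul (gpow (- 2 * r)) P else fzero)
                (fsum (\<lambda>a. fsmul (gcoef (qpow (B i m)) a)
                        (fprod [gpow (2 * int a), xm i (n - int a), OmPhi B m (r + int a) P])) {..<M})))
  \<and> (\<forall>j\<in>{1..N}. \<forall>k\<in>{1..N}. \<forall>r1 r2 :: int. \<forall>P\<in>nsub N.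
      ueq N B
        (fsub (fsmul (qpow (B j k)) (OmPsi B j (r1 + 1) (OmPsi B k r2 P)))
              (OmPsi B j r1 (OmPsi B k (r2 + 1) P)))
        (fsub (OmPsi B k r2 (OmPsi B j (r1 + 1) P))
              (fsmul (qpow (B j k)) (OmPsi B k (r2 + 1) (OmPsi B j r1 P)))))
  \<and> (\<forall>j\<in>{1..N}. \<forall>k\<in>{1..N}. \<forall>r1 r2 :: int. \<forall>P\<in>nsub N.
      ueq N B
        (fsub (fsmul (qpow (B j k)) (OmPhi B j (r1 + 1) (OmPhi B k r2 P)))
              (OmPhi B j r1 (OmPhi B k (r2 + 1) P)))
        (fsub (OmPhi B k r2 (OmPhi B j (r1 + 1) P))
              (fsmul (qpow (B j k)) (OmPhi B k (r2 + 1) (OmPhi B j r1 P)))))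
  \<and> (\<forall>j\<in>{1..N}. \<forall>k\<in>{1..N}. \<forall>r1 r2 :: int. \<forall>P\<in>nsub N.
      ueq N B
        (fsub (fsmul (qpow (B j k)) (fmul (gpow 4) (OmPhi B j (r1 + 1) (OmPsi B k r2 P))))
              (OmPhi B j r1 (OmPsi B k (r2 + 1) P)))
        (fsub (fmul (gpow 4) (OmPsi B k r2 (OmPhi B j (r1 + 1) P)))
              (fsmul (qpow (B j k)) (OmPsi B k (r2 + 1) (OmPhi B j r1 P)))))"
proof -
  have sym: "B i j = B j i" if "i \<in> {1..N}" "j \<in> {1..N}" for i j
    using simple_form_sym[OF assms that] .
  show ?thesis
    by (intro conjI ballI allI OmPsi_xm OmPhi_xm OmPsi_OmPsi OmPhi_OmPhi OmPhi_OmPsi) (simp_all add: sym)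
qed

end
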